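(* Let $n\geqslant 2$, $k\in\{1,2,\dots,2^n-1\}$ and let $\ket{\psi}$ be an $n$-qubit state with $\braket{i}{\psi}=0$ for $i\in\{0,\dots,k-1\}$. There exists a unitary $G_k$ on $n$ qubits with $G_k\ket{i}_n=e^{\mathrm i\varphi_i}\ket{i}_n$ for $i\in\{0,\dots,k-1\}$ and $G_k\ket{\psi}=e^{\mathrm i\varphi_k}\ket{k}_n$ ($\varphi_i\in\mathbb R$) which can be decomposed into single-qubit and C-NOT gates using at most $(2^n-n-1)+Q^k(n)N_{C_{n-1}(U)}$ C-NOT gates, where $Q^k(n)=|\{s\in\{0,\dots,n-1\}: k_s=0\text{ and }b^k_{s+1}\neq 0\}|$.
   Context: Computational basis of $n$ qubits: $\ket{b_{n-1}\dots b_0}=:\ket{\sum_ib_i2^i}_n$. $k_i$ are the binary digits of $k$, and $b^k_{s}=k \bmod 2^{s}$. $N_{C_{n-1}(U)}$ denotes a number of C-NOT gates sufficient to decompose any $(n-1)$-controlled single-qubit gate on $n$ qubits (applying a single-qubit unitary to one target qubit iff the other $n-1$ qubits are in a prescribed computational basis state, identity otherwise) into single-qubit and C-NOT gates. *)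

theory Defs
  imports Complex_Main "Jordan_Normal_Form.Matrix" "Jordan_Normal_Form.Schur_Decomposition"
begin

(* Computational basis of n qubits: |b_{n-1} ... b_0> = |sum_i b_i 2^i>_n.
   Qubit q therefore corresponds to bit q of the basis index. *)

definition qbit :: "nat \<Rightarrow> nat \<Rightarrow> nat" where
  "qbit i q = i div 2 ^ q mod 2"

definition unitary2 :: "complex mat \<Rightarrow> bool" where
  "unitary2 U \<longleftrightarrow> U \<in> carrier_mat 2 2 \<and> mat_adjoint U * U = 1\<^sub>m 2"

(* elementary gates: single-qubit gate U on target qubit t; C-NOT with control c, target t *)
datatype gate = Single nat "complex mat" | CNOT nat nat

fun wf_gate :: "nat \<Rightarrow> gate \<Rightarrow> bool" where
  "wf_gate n (Single t U) \<longleftrightarrow> t < n \<and> unitary2 U"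
| "wf_gate n (CNOT c t) \<longleftrightarrow> c < n \<and> t < n \<and> c \<noteq> t"

definition flip :: "nat \<Rightarrow> nat \<Rightarrow> nat" where
  "flip t j = (if qbit j t = 1 then j - 2 ^ t else j + 2 ^ t)"

fun gate_mat :: "nat \<Rightarrow> gate \<Rightarrow> complex mat" where
  "gate_mat n (Single t U) = mat (2 ^ n) (2 ^ n)
      (\<lambda>(i, j). if (\<forall>q. q \<noteq> t \<longrightarrow> qbit i q = qbit j q) then U $$ (qbit i t, qbit j t) else 0)"
| "gate_mat n (CNOT c t) = mat (2 ^ n) (2 ^ n)
      (\<lambda>(i, j). if i = (if qbit j c = 1 then flip t j else j) then 1 else 0)"

(* a circuit is a list of gates, applied from the head of the list onwards *)
type_synonym circuit = "gate list"

fun circuit_mat :: "nat \<Rightarrow> circuit \<Rightarrow> complex mat" where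
  "circuit_mat n [] = 1\<^sub>m (2 ^ n)"
| "circuit_mat n (g # gs) = circuit_mat n gs * gate_mat n g"

definition wf_circuit :: "nat \<Rightarrow> circuit \<Rightarrow> bool" where
  "wf_circuit n C \<longleftrightarrow> (\<forall>g \<in> set C. wf_gate n g)"

definition cnot_count :: "circuit \<Rightarrow> nat" where
  "cnot_count C = length (filter (\<lambda>g. case g of CNOT _ _ \<Rightarrow> True | _ \<Rightarrow> False) C)"

definition decomposable_with :: "nat \<Rightarrow> nat \<Rightarrow> complex mat \<Rightarrow> bool" where
  "decomposable_with n m M \<longleftrightarrow>
     (\<exists>C. wf_circuit n C \<and> circuit_mat n C = M \<and> cnot_count C \<le> m)"

definition controlled_gate :: "nat \<Rightarrow> nat \<Rightarrow> nat \<Rightarrow> complex mat \<Rightarrow> complex mat" where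
  "controlled_gate n t p U = mat (2 ^ n) (2 ^ n)
      (\<lambda>(i, j). if (\<forall>q < n. q \<noteq> t \<longrightarrow> qbit i q = qbit p q \<and> qbit j q = qbit p q)
                then U $$ (qbit i t, qbit j t) else (if i = j then 1 else 0))"

definition sufficient_CU :: "nat \<Rightarrow> nat \<Rightarrow> bool" where
  "sufficient_CU n N \<longleftrightarrow>
     (\<forall>t p U. t < n \<longrightarrow> p < 2 ^ n \<longrightarrow> unitary2 U \<longrightarrow>
        decomposable_with n N (controlled_gate n t p U))"

definition Qk :: "nat \<Rightarrow> nat \<Rightarrow> nat" where
  "Qk k n = card {s \<in> {0..<n}. qbit k s = 0 \<and> k mod 2 ^ (s + 1) \<noteq> 0}"

end

theory Submission
  imports Defs
begin

text \<open>The circuit clears the qubits of the state one at a time, starting from the least significant.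
  Before step \<open>s\<close> the amplitudes live on indices \<open>x \<ge> k\<close> that agree with \<open>k\<close> below bit \<open>s\<close>.
  A gate on qubit \<open>s\<close> uniformly controlled by the higher qubits merges each pair of amplitudes
  differing only in bit \<open>s\<close> into the slot \<open>k\<^sub>s\<close>; it multiplies every basis state below \<open>k\<close> by
  a phase and, by the recursive demultiplexing of uniformly controlled gates, costs
  \<open>2 ^ (n - 1 - s) - 1\<close> C-NOTs. Only the pair in the block of \<open>k\<close> may resist merging, exactly when
  \<open>k\<^sub>s = 0\<close> while \<open>b\<^sup>k\<^sub>s\<^sub>+\<^sub>1 \<noteq> 0\<close>; one \<open>(n - 1)\<close>-controlled gate then finishes the step. Summing
  over \<open>s\<close> gives \<open>2 ^ n - n - 1 + Q\<^sup>k(n) N\<close>, and the final state, being a unit vector supported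
  on \<open>k\<close>, is a phase times \<open>|k\<rangle>\<close>.\<close>

declare power_Suc [simp del]

section \<open>Bits of basis indices\<close>

definition agree_except :: "nat \<Rightarrow> nat \<Rightarrow> nat \<Rightarrow> bool" where
  "agree_except t a b \<longleftrightarrow> a div 2 ^ Suc t = b div 2 ^ Suc t \<and> a mod 2 ^ t = b mod 2 ^ t"

definition set_qbit :: "nat \<Rightarrow> nat \<Rightarrow> nat \<Rightarrow> nat" where
  "set_qbit t \<beta> a = a div 2 ^ Suc t * 2 ^ Suc t + \<beta> * 2 ^ t + a mod 2 ^ t"

lemma qbit_less_2: "qbit a t < 2"
  unfolding qbit_def by simp

lemma qbit_cases: "qbit a t = 0 \<or> qbit a t = 1"
  using qbit_less_2[of a t] by linarith

lemma qbit_eq_of_bool_bit: "qbit a q = (if bit a q then 1 else 0)"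
  unfolding qbit_def bit_nat_def by (simp add: odd_iff_mod_2_eq_one)

lemma index_decomp: "a = a div 2 ^ Suc t * 2 ^ Suc t + qbit a t * 2 ^ t + a mod 2 ^ t"
proof -
  have "a div 2 ^ Suc t * 2 + qbit a t = a div 2 ^ t"
    unfolding qbit_def power_Suc2 div_mult2_eq by simp
  moreover have "a = a div 2 ^ t * 2 ^ t + a mod 2 ^ t"
    by (rule div_mult_mod_eq[symmetric])
  ultimately have "a = (a div 2 ^ Suc t * 2 + qbit a t) * 2 ^ t + a mod 2 ^ t"
    by simp
  then show ?thesis
    by (simp add: algebra_simps power_Suc)
qed

lemma mod_pow_Suc_decomp: "a mod 2 ^ Suc t = qbit a t * 2 ^ t + a mod 2 ^ t"
  using mod_mult2_eq[of a "2 ^ t" 2] unfolding qbit_def by (simp add: power_Suc2 mult.commute)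

lemma bit_slot_less:
  assumes "(\<beta>::nat) < 2" "L < 2 ^ t"
  shows "\<beta> * 2 ^ t + L < 2 ^ Suc t"
proof -
  have "\<beta> * 2 ^ t \<le> 1 * 2 ^ t"
    using assms(1) by (intro mult_right_mono) auto
  moreover have "(2::nat) ^ Suc t = 2 ^ t + 2 ^ t"
    by (simp add: power_Suc)
  ultimately show ?thesis
    using assms(2) by linarith
qed

lemma index_parts:
  assumes "\<beta> < 2" "L < 2 ^ t"
  shows "(H * 2 ^ Suc t + \<beta> * 2 ^ t + L) div 2 ^ Suc t = H"
    and "(H * 2 ^ Suc t + \<beta> * 2 ^ t + L) mod 2 ^ t = L"
    and "qbit (H * 2 ^ Suc t + \<beta> * 2 ^ t + L) t = \<beta>"
proof -
  show "(H * 2 ^ Suc t + \<beta> * 2 ^ t + L) div 2 ^ Suc t = H"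
    using bit_slot_less[OF assms] by (simp add: add.assoc)
  have eq: "H * 2 ^ Suc t + \<beta> * 2 ^ t + L = (H * 2 + \<beta>) * 2 ^ t + L"
    by (simp add: algebra_simps power_Suc)
  then show "(H * 2 ^ Suc t + \<beta> * 2 ^ t + L) mod 2 ^ t = L"
    using assms(2) by simp
  show "qbit (H * 2 ^ Suc t + \<beta> * 2 ^ t + L) t = \<beta>"
    unfolding qbit_def eq using assms by simp
qed

lemma index_less_of_high_less:
  assumes "H < H'" "\<beta> < 2" "(L::nat) < 2 ^ s"
  shows "H * 2 ^ Suc s + \<beta> * 2 ^ s + L < H' * 2 ^ Suc s + \<beta>' * 2 ^ s + L'"
proof -
  have "H * 2 ^ Suc s + \<beta> * 2 ^ s + L < (H + 1) * 2 ^ Suc s"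
    using bit_slot_less[OF assms(2,3)] by (simp add: algebra_simps)
  also have "\<dots> \<le> H' * 2 ^ Suc s"
    using assms(1) by (intro mult_right_mono) auto
  finally show ?thesis by linarith
qed

lemma set_qbit_div [simp]: "\<beta> < 2 \<Longrightarrow> set_qbit t \<beta> a div 2 ^ Suc t = a div 2 ^ Suc t"
  unfolding set_qbit_def by (rule index_parts(1)) simp_all

lemma set_qbit_mod [simp]: "\<beta> < 2 \<Longrightarrow> set_qbit t \<beta> a mod 2 ^ t = a mod 2 ^ t"
  unfolding set_qbit_def by (rule index_parts(2)) simp_all

lemma qbit_set_qbit [simp]: "\<beta> < 2 \<Longrightarrow> qbit (set_qbit t \<beta> a) t = \<beta>"
  unfolding set_qbit_def by (rule index_parts(3)) simp_all

lemma set_qbit_qbit_self [simp]: "set_qbit t (qbit a t) a = a"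
  unfolding set_qbit_def by (rule index_decomp[symmetric])

lemma set_qbit_0_neq_1: "set_qbit t 0 a \<noteq> set_qbit t 1 a"
  using qbit_set_qbit[of 0 t a] qbit_set_qbit[of 1 t a] by force

lemma div_pow_Suc_less:
  assumes "(a::nat) < 2 ^ n" "s < n"
  shows "a div 2 ^ Suc s < 2 ^ (n - Suc s)"
proof -
  have "n = (n - Suc s) + Suc s"
    using assms(2) by simp
  then have "(2::nat) ^ n = 2 ^ (n - Suc s) * 2 ^ Suc s"
    by (metis power_add)
  then show ?thesis
    using assms(1) by (simp add: less_mult_imp_div_less)
qed

lemma set_qbit_less:
  assumes "a < 2 ^ n" "t < n" "\<beta> < 2"
  shows "set_qbit t \<beta> a < 2 ^ n"
proof -
  have "n = (n - Suc t) + Suc t"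
    using assms(2) by simp
  then have pow: "(2::nat) ^ n = 2 ^ (n - Suc t) * 2 ^ Suc t"
    by (metis power_add)
  have "a div 2 ^ Suc t < 2 ^ (n - Suc t)"
    using assms(1) unfolding pow by (rule less_mult_imp_div_less)
  then have "(a div 2 ^ Suc t + 1) * 2 ^ Suc t \<le> 2 ^ n"
    unfolding pow by (intro mult_right_mono) auto
  then show ?thesis
    using bit_slot_less[OF assms(3), of "a mod 2 ^ t" t] unfolding set_qbit_def
    by (simp add: algebra_simps)
qed

lemma agree_except_refl [simp]: "agree_except t a a"
  unfolding agree_except_def by simp

lemma agree_except_sym: "agree_except t a b \<Longrightarrow> agree_except t b a"
  unfolding agree_except_def by simp

lemma agree_except_trans: "agree_except t a b \<Longrightarrow> agree_except t b c \<Longrightarrow> agree_except t a c"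
  unfolding agree_except_def by simp

lemma agree_except_set_qbit [simp]: "\<beta> < 2 \<Longrightarrow> agree_except t (set_qbit t \<beta> a) a"
  using set_qbit_div set_qbit_mod unfolding agree_except_def by blast

lemma set_qbit_cong: "agree_except t a b \<Longrightarrow> set_qbit t \<gamma> a = set_qbit t \<gamma> b"
  unfolding agree_except_def set_qbit_def by simp

lemma eq_set_qbit_if_agree_except: "agree_except t a b \<Longrightarrow> b = set_qbit t (qbit b t) a"
  using set_qbit_cong[of t a b "qbit b t"] by simp

lemma agree_except_eqI: "agree_except t a b \<Longrightarrow> qbit a t = qbit b t \<Longrightarrow> a = b"
  using eq_set_qbit_if_agree_except[of t a b] by (metis set_qbit_qbit_self)

lemma eq_set_qbit_iff: "\<gamma> < 2 \<Longrightarrow> a = set_qbit t \<gamma> b \<longleftrightarrow> agree_except t a b \<and> qbit a t = \<gamma>"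
  using eq_set_qbit_if_agree_except[of t b a] agree_except_sym by fastforce

lemma bit_div_pow: "bit ((a::nat) div 2 ^ m) q = bit a (m + q)"
  by (simp add: bit_nat_def div_mult2_eq power_add)

lemma bit_mod_pow: "bit ((a::nat) mod 2 ^ m) q \<longleftrightarrow> q < m \<and> bit a q"
  unfolding take_bit_eq_mod[symmetric] by (rule bit_take_bit_iff)

lemma agree_except_iff_qbit: "agree_except t a b \<longleftrightarrow> (\<forall>q. q \<noteq> t \<longrightarrow> qbit a q = qbit b q)"
proof
  assume agree: "\<forall>q. q \<noteq> t \<longrightarrow> qbit a q = qbit b q"
  then have bits: "bit a q = bit b q" if "q \<noteq> t" for q
    using that unfolding qbit_eq_of_bool_bit by (auto split: if_splits)
  have "a div 2 ^ Suc t = b div 2 ^ Suc t"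
  proof (rule bit_eqI)
    fix m
    show "bit (a div 2 ^ Suc t) m = bit (b div 2 ^ Suc t) m"
      unfolding bit_div_pow using bits[of "Suc t + m"] by simp
  qed
  moreover have "a mod 2 ^ t = b mod 2 ^ t"
    by (rule bit_eqI) (auto simp: bit_mod_pow bits)
  ultimately show "agree_except t a b"
    unfolding agree_except_def by simp
next
  assume "agree_except t a b"
  then have hi: "a div 2 ^ Suc t = b div 2 ^ Suc t" and lo: "a mod 2 ^ t = b mod 2 ^ t"
    unfolding agree_except_def by auto
  have "bit a q = bit b q" if q: "q \<noteq> t" for q
  proof (cases "q < t")
    case True
    then show ?thesis using bit_mod_pow[of a t q] bit_mod_pow[of b t q] lo by simp
  next
    case False
    then obtain r where "q = Suc t + r"
      using q less_imp_Suc_add[of t q] by fastforce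
    then show ?thesis using bit_div_pow[of a "Suc t" r] bit_div_pow[of b "Suc t" r] hi by simp
  qed
  then show "\<forall>q. q \<noteq> t \<longrightarrow> qbit a q = qbit b q"
    unfolding qbit_eq_of_bool_bit by simp
qed

lemma qbit_eq_0_if_less: "(a::nat) < 2 ^ n \<Longrightarrow> n \<le> q \<Longrightarrow> qbit a q = 0"
proof -
  assume "a < 2 ^ n" "n \<le> q"
  then have "a < 2 ^ q"
    by (meson order_less_le_trans one_le_numeral power_increasing)
  then show ?thesis
    unfolding qbit_def by simp
qed

lemma agree_except_iff_qbit_less:
  assumes "a < 2 ^ n" "b < 2 ^ n"
  shows "agree_except t a b \<longleftrightarrow> (\<forall>q<n. q \<noteq> t \<longrightarrow> qbit a q = qbit b q)"
  unfolding agree_except_iff_qbit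
  using qbit_eq_0_if_less[OF assms(1)] qbit_eq_0_if_less[OF assms(2)] not_less by metis

lemma agree_except_qbit_eq: "agree_except t a b \<Longrightarrow> c \<noteq> t \<Longrightarrow> qbit a c = qbit b c"
  unfolding agree_except_iff_qbit by blast

lemma flip_eq_set_qbit: "flip t b = set_qbit t (1 - qbit b t) b"
  using index_decomp[of b t] qbit_cases[of b t] unfolding flip_def set_qbit_def
  by (auto simp: algebra_simps)

section \<open>Multiplexed single-qubit gates\<close>

text \<open>\<open>mux_mat n t B\<close> applies the \<open>2 \<times> 2\<close> matrix \<open>B a\<close> to qubit \<open>t\<close> of the basis state \<open>a\<close>;
  it is a unitary gate when \<open>B\<close> does not depend on that qubit.\<close>

definition mux_mat :: "nat \<Rightarrow> nat \<Rightarrow> (nat \<Rightarrow> complex mat) \<Rightarrow> complex mat" where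
  "mux_mat n t B = mat (2 ^ n) (2 ^ n)
     (\<lambda>(a, b). if agree_except t a b then B a $$ (qbit a t, qbit b t) else 0)"

definition indep_of_qbit :: "nat \<Rightarrow> (nat \<Rightarrow> 'a) \<Rightarrow> bool" where
  "indep_of_qbit t B \<longleftrightarrow> (\<forall>a b. agree_except t a b \<longrightarrow> B a = B b)"

lemma mux_mat_carrier [simp]: "mux_mat n t B \<in> carrier_mat (2 ^ n) (2 ^ n)"
  unfolding mux_mat_def by simp

lemma mux_mat_dim [simp]:
  "dim_row (mux_mat n t B) = 2 ^ n" "dim_col (mux_mat n t B) = 2 ^ n"
  unfolding mux_mat_def by simp_all

lemma mux_mat_index:
  "a < 2 ^ n \<Longrightarrow> b < 2 ^ n \<Longrightarrow>
   mux_mat n t B $$ (a, b) = (if agree_except t a b then B a $$ (qbit a t, qbit b t) else 0)"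
  unfolding mux_mat_def by simp

lemma mux_mat_cong: "(\<And>a. a < 2 ^ n \<Longrightarrow> B a = B' a) \<Longrightarrow> mux_mat n t B = mux_mat n t B'"
  unfolding mux_mat_def by (intro eq_matI) auto

lemma indep_of_qbit_const: "indep_of_qbit t (\<lambda>_. U)"
  unfolding indep_of_qbit_def by simp

lemma indep_of_qbit_div: "indep_of_qbit t (\<lambda>a. G (a div 2 ^ Suc t))"
  unfolding indep_of_qbit_def agree_except_def by simp

lemma indep_of_qbit_qbit: "c \<noteq> t \<Longrightarrow> indep_of_qbit t (\<lambda>a. f (qbit a c))"
  unfolding indep_of_qbit_def using agree_except_qbit_eq by metis

lemma agree_except_set:
  assumes "a < 2 ^ n" "t < n"
  shows "{b \<in> {0..<2 ^ n}. agree_except t a b} = {set_qbit t 0 a, set_qbit t 1 a}"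
proof
  show "{b \<in> {0..<2 ^ n}. agree_except t a b} \<subseteq> {set_qbit t 0 a, set_qbit t 1 a}"
  proof
    fix b
    assume "b \<in> {b \<in> {0..<2 ^ n}. agree_except t a b}"
    then have "b = set_qbit t (qbit b t) a"
      by (simp add: eq_set_qbit_if_agree_except)
    then show "b \<in> {set_qbit t 0 a, set_qbit t 1 a}"
      using qbit_cases[of b t] by auto
  qed
  show "{set_qbit t 0 a, set_qbit t 1 a} \<subseteq> {b \<in> {0..<2 ^ n}. agree_except t a b}"
    using set_qbit_less[OF assms] agree_except_set_qbit agree_except_sym by auto
qed

lemma sum_agree_except:
  assumes "a < 2 ^ n" "t < n"
  shows "(\<Sum>b\<in>{0..<2 ^ n}. if agree_except t a b then f b else 0)
    = f (set_qbit t 0 a) + f (set_qbit t 1 a)"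
proof -
  have "(\<Sum>b\<in>{0..<2 ^ n}. if agree_except t a b then f b else 0)
      = sum f {b \<in> {0..<2 ^ n}. agree_except t a b}"
    by (rule sum.inter_filter[symmetric]) simp
  also have "\<dots> = f (set_qbit t 0 a) + f (set_qbit t 1 a)"
    unfolding agree_except_set[OF assms] using set_qbit_0_neq_1 by simp
  finally show ?thesis .
qed

lemma mux_mat_mult_vec:
  assumes "a < 2 ^ n" "t < n" "v \<in> carrier_vec (2 ^ n)"
  shows "(mux_mat n t B *\<^sub>v v) $ a
    = B a $$ (qbit a t, 0) * v $ set_qbit t 0 a + B a $$ (qbit a t, 1) * v $ set_qbit t 1 a"
proof -
  have "(mux_mat n t B *\<^sub>v v) $ a = (\<Sum>b\<in>{0..<2 ^ n}. mux_mat n t B $$ (a, b) * v $ b)"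
    using assms by (simp add: scalar_prod_def)
  also have "\<dots> = (\<Sum>b\<in>{0..<2 ^ n}.
      if agree_except t a b then B a $$ (qbit a t, qbit b t) * v $ b else 0)"
    using assms by (intro sum.cong) (auto simp: mux_mat_index)
  also have "\<dots> = B a $$ (qbit a t, 0) * v $ set_qbit t 0 a + B a $$ (qbit a t, 1) * v $ set_qbit t 1 a"
    using sum_agree_except[OF assms(1,2), of "\<lambda>b. B a $$ (qbit a t, qbit b t) * v $ b"] by simp
  finally show ?thesis .
qed

lemma mat2_mult_index:
  assumes "A \<in> carrier_mat 2 2" "B \<in> carrier_mat 2 2" "i < 2" "j < 2"
  shows "(A * B) $$ (i, j) = A $$ (i, 0) * B $$ (0, j) + A $$ (i, 1) * B $$ (1, j)"
  using assms by (simp add: scalar_prod_def numeral_2_eq_2)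

lemma mux_mat_mult:
  assumes "t < n" "indep_of_qbit t B'"
    and "\<And>a. a < 2 ^ n \<Longrightarrow> B a \<in> carrier_mat 2 2" "\<And>a. a < 2 ^ n \<Longrightarrow> B' a \<in> carrier_mat 2 2"
  shows "mux_mat n t B * mux_mat n t B' = mux_mat n t (\<lambda>a. B a * B' a)"
proof (rule eq_matI)
  fix a c
  assume "a < dim_row (mux_mat n t (\<lambda>a. B a * B' a))" "c < dim_col (mux_mat n t (\<lambda>a. B a * B' a))"
  then have a: "a < 2 ^ n" and c: "c < 2 ^ n" by auto
  have "(mux_mat n t B * mux_mat n t B') $$ (a, c)
      = (\<Sum>b\<in>{0..<2 ^ n}. mux_mat n t B $$ (a, b) * mux_mat n t B' $$ (b, c))"
    using a c by (simp add: scalar_prod_def)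
  also have "\<dots> = (\<Sum>b\<in>{0..<2 ^ n}. if agree_except t a b
      then B a $$ (qbit a t, qbit b t) * mux_mat n t B' $$ (b, c) else 0)"
    using a c by (intro sum.cong) (auto simp: mux_mat_index[of a n])
  also have "\<dots> = B a $$ (qbit a t, 0) * mux_mat n t B' $$ (set_qbit t 0 a, c)
      + B a $$ (qbit a t, 1) * mux_mat n t B' $$ (set_qbit t 1 a, c)"
    using sum_agree_except[OF a assms(1),
        of "\<lambda>b. B a $$ (qbit a t, qbit b t) * mux_mat n t B' $$ (b, c)"] by simp
  also have "\<dots> = mux_mat n t (\<lambda>a. B a * B' a) $$ (a, c)"
  proof (cases "agree_except t a c")
    case True
    have "agree_except t (set_qbit t \<beta> a) c" if "\<beta> < 2" for \<beta>
      using True that agree_except_set_qbit agree_except_trans by blast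
    moreover have "B' (set_qbit t \<beta> a) = B' a" if "\<beta> < 2" for \<beta>
      using that assms(2) agree_except_set_qbit unfolding indep_of_qbit_def by blast
    ultimately show ?thesis
      using True a c set_qbit_less[OF a assms(1)] qbit_less_2[of a t] qbit_less_2[of c t]
      by (simp add: mux_mat_index mat2_mult_index assms(3,4)[OF a])
  next
    case False
    then have "\<not> agree_except t (set_qbit t \<beta> a) c" if "\<beta> < 2" for \<beta>
      using that agree_except_set_qbit agree_except_trans agree_except_sym by blast
    then show ?thesis
      using False a c set_qbit_less[OF a assms(1)] by (simp add: mux_mat_index)
  qed
  finally show "(mux_mat n t B * mux_mat n t B') $$ (a, c) = mux_mat n t (\<lambda>a. B a * B' a) $$ (a, c)" .
qed auto

lemma mat_adjoint_index:
  "i < dim_col A \<Longrightarrow> j < dim_row A \<Longrightarrow> mat_adjoint A $$ (i, j) = conjugate (A $$ (j, i))"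
  unfolding mat_adjoint_def by (simp add: mat_of_rows_def)

lemma mat_adjoint_dim [simp]:
  "dim_row (mat_adjoint A) = dim_col A" "dim_col (mat_adjoint A) = dim_row A"
  unfolding mat_adjoint_def by (simp_all add: mat_of_rows_def)

lemma mat_adjoint_carrier: "A \<in> carrier_mat m n \<Longrightarrow> mat_adjoint A \<in> carrier_mat n m"
  by (intro carrier_matI) (auto dest: carrier_matD)

lemma mux_mat_adjoint:
  assumes "indep_of_qbit t B" "\<And>a. B a \<in> carrier_mat 2 2"
  shows "mat_adjoint (mux_mat n t B) = mux_mat n t (\<lambda>a. mat_adjoint (B a))"
proof (rule eq_matI)
  fix a c
  assume "a < dim_row (mux_mat n t (\<lambda>a. mat_adjoint (B a)))"
    "c < dim_col (mux_mat n t (\<lambda>a. mat_adjoint (B a)))"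
  then show "mat_adjoint (mux_mat n t B) $$ (a, c) = mux_mat n t (\<lambda>a. mat_adjoint (B a)) $$ (a, c)"
    using assms qbit_less_2[of a t] qbit_less_2[of c t] unfolding indep_of_qbit_def
    by (auto simp: mat_adjoint_index mux_mat_index agree_except_sym carrier_matD[OF assms(2)])
qed auto

lemma mux_mat_one: "mux_mat n t (\<lambda>_. 1\<^sub>m 2) = 1\<^sub>m (2 ^ n)"
proof (rule eq_matI)
  fix a c
  assume "a < dim_row (1\<^sub>m (2 ^ n) :: complex mat)" "c < dim_col (1\<^sub>m (2 ^ n) :: complex mat)"
  then show "mux_mat n t (\<lambda>_. 1\<^sub>m 2) $$ (a, c) = 1\<^sub>m (2 ^ n) $$ (a, c)"
    using qbit_less_2[of a t] qbit_less_2[of c t] agree_except_eqI[of t a c]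
    by (auto simp: mux_mat_index)
qed auto

lemma mux_mat_unit_vec:
  assumes "i < 2 ^ n" "t < n" "indep_of_qbit t B" "B i $$ (1 - qbit i t, qbit i t) = 0"
  shows "mux_mat n t B *\<^sub>v unit_vec (2 ^ n) i = B i $$ (qbit i t, qbit i t) \<cdot>\<^sub>v unit_vec (2 ^ n) i"
proof (rule eq_vecI)
  fix a
  assume "a < dim_vec (B i $$ (qbit i t, qbit i t) \<cdot>\<^sub>v unit_vec (2 ^ n) i)"
  then have a: "a < 2 ^ n" by simp
  have unit: "(unit_vec (2 ^ n) i :: complex vec) $ set_qbit t \<beta> a
      = (if agree_except t a i \<and> \<beta> = qbit i t then 1 else 0)" if "\<beta> < 2" for \<beta>
    using set_qbit_less[OF a assms(2) that] eq_set_qbit_iff[OF that, of i t a]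
      agree_except_sym[of t a i] agree_except_sym[of t i a]
    by (auto simp: unit_vec_def)
  have "(mux_mat n t B *\<^sub>v unit_vec (2 ^ n) i) $ a
      = (if agree_except t a i then B a $$ (qbit a t, qbit i t) else 0)"
  proof -
    have "(unit_vec (2 ^ n) i :: complex vec) $ set_qbit t 0 a
        = (if agree_except t a i \<and> 0 = qbit i t then 1 else 0)"
      by (rule unit) simp
    moreover have "(unit_vec (2 ^ n) i :: complex vec) $ set_qbit t 1 a
        = (if agree_except t a i \<and> 1 = qbit i t then 1 else 0)"
      by (rule unit) simp
    ultimately show ?thesis
      unfolding mux_mat_mult_vec[OF a assms(2) unit_vec_carrier]
      using qbit_cases[of i t] by auto
  qed
  also have "\<dots> = (B i $$ (qbit i t, qbit i t) \<cdot>\<^sub>v unit_vec (2 ^ n) i) $ a"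
  proof (cases "agree_except t a i")
    case True
    then have "B a = B i"
      using assms(3) unfolding indep_of_qbit_def by blast
    moreover have "qbit a t = 1 - qbit i t" if "a \<noteq> i"
      using agree_except_eqI[OF True] that qbit_cases[of a t] qbit_cases[of i t] by auto
    ultimately show ?thesis
      using True a assms(4) by (auto simp: unit_vec_def)
  next
    case False
    then show ?thesis
      using a by (auto simp: unit_vec_def)
  qed
  finally show "(mux_mat n t B *\<^sub>v unit_vec (2 ^ n) i) $ a
      = (B i $$ (qbit i t, qbit i t) \<cdot>\<^sub>v unit_vec (2 ^ n) i) $ a" .
qed simp

definition mat2 :: "complex \<Rightarrow> complex \<Rightarrow> complex \<Rightarrow> complex \<Rightarrow> complex mat" where
  "mat2 a b c d = mat 2 2 (\<lambda>(i, j). if i = 0 then (if j = 0 then a else b) else (if j = 0 then c else d))"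

lemma mat2_carrier [simp]: "mat2 a b c d \<in> carrier_mat 2 2"
  unfolding mat2_def by simp

lemma mat2_dim [simp]: "dim_row (mat2 a b c d) = 2" "dim_col (mat2 a b c d) = 2"
  unfolding mat2_def by simp_all

lemma mat2_index [simp]:
  "mat2 a b c d $$ (0, 0) = a" "mat2 a b c d $$ (0, 1) = b"
  "mat2 a b c d $$ (1, 0) = c" "mat2 a b c d $$ (1, 1) = d"
  "mat2 a b c d $$ (0, Suc 0) = b" "mat2 a b c d $$ (Suc 0, 0) = c"
  "mat2 a b c d $$ (Suc 0, Suc 0) = d"
  unfolding mat2_def by simp_all

lemma mat2_eqI:
  assumes "A \<in> carrier_mat 2 2" "B \<in> carrier_mat 2 2"
    and "A $$ (0, 0) = B $$ (0, 0)" "A $$ (0, 1) = B $$ (0, 1)"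
    and "A $$ (1, 0) = B $$ (1, 0)" "A $$ (1, 1) = B $$ (1, 1)"
  shows "A = B"
proof (rule eq_matI)
  fix i j
  assume "i < dim_row B" "j < dim_col B"
  then have "i = 0 \<or> i = 1" "j = 0 \<or> j = 1"
    using assms(2) by auto
  then show "A $$ (i, j) = B $$ (i, j)"
    using assms by auto
qed (use assms in auto)

lemma mat2_cases:
  assumes "A \<in> carrier_mat 2 2"
  obtains a b c d where "A = mat2 a b c d"
  using mat2_eqI[OF assms mat2_carrier, of "A $$ (0, 0)" "A $$ (0, 1)" "A $$ (1, 0)" "A $$ (1, 1)"]
  by simp

lemma mat2_eq_iff: "mat2 a b c d = mat2 a' b' c' d' \<longleftrightarrow> a = a' \<and> b = b' \<and> c = c' \<and> d = d'"
  by (metis mat2_index)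

lemma mat2_mult [simp]:
  "mat2 a b c d * mat2 e f g h = mat2 (a * e + b * g) (a * f + b * h) (c * e + d * g) (c * f + d * h)"
  by (rule mat2_eqI[OF mult_carrier_mat[OF mat2_carrier mat2_carrier] mat2_carrier])
    (simp_all add: scalar_prod_def numeral_2_eq_2 row_def col_def)

lemma mat2_adjoint [simp]: "mat_adjoint (mat2 a b c d) = mat2 (cnj a) (cnj c) (cnj b) (cnj d)"
  by (rule mat2_eqI) (simp_all add: mat_adjoint_index mat_adjoint_carrier)

lemma one_mat2: "1\<^sub>m 2 = mat2 1 0 0 1"
  by (rule mat2_eqI) auto

definition X_gate :: "complex mat" where
  "X_gate = mat2 0 1 1 0"

definition Z_gate :: "complex mat" where
  "Z_gate = mat2 1 0 0 (-1)"

definition H_gate :: "complex mat" where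
  "H_gate = (let h = complex_of_real (1 / sqrt 2) in mat2 h h h (- h))"

lemma H_gate_conj:
  "H_gate * X_gate * H_gate = Z_gate" "H_gate * 1\<^sub>m 2 * H_gate = 1\<^sub>m 2"
proof -
  have "complex_of_real (1 / sqrt 2) * complex_of_real (1 / sqrt 2) = 1 / 2"
    by (simp flip: of_real_mult)
  then show "H_gate * X_gate * H_gate = Z_gate" "H_gate * 1\<^sub>m 2 * H_gate = 1\<^sub>m 2"
    unfolding H_gate_def X_gate_def Z_gate_def one_mat2 Let_def
    by (simp_all add: mat2_eq_iff algebra_simps)
qed

lemma unitary2_carrier: "unitary2 U \<Longrightarrow> U \<in> carrier_mat 2 2"
  unfolding unitary2_def by simp

lemma unitary2_mat2_iff:
  "unitary2 (mat2 a b c d) \<longleftrightarrow> cnj a * a + cnj c * c = 1 \<and> cnj a * b + cnj c * d = 0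
     \<and> cnj b * a + cnj d * c = 0 \<and> cnj b * b + cnj d * d = 1"
  unfolding unitary2_def one_mat2 by (simp add: mat2_eq_iff)

lemma unitary2_one: "unitary2 (1\<^sub>m 2)"
  unfolding one_mat2 unitary2_mat2_iff by simp

lemma unitary2_X_gate: "unitary2 X_gate"
  unfolding X_gate_def unitary2_mat2_iff by simp

lemma unitary2_H_gate: "unitary2 H_gate"
proof -
  have "cnj (complex_of_real (1 / sqrt 2)) * complex_of_real (1 / sqrt 2) = 1 / 2"
    by (simp flip: of_real_mult)
  then show ?thesis
    unfolding H_gate_def Let_def unitary2_mat2_iff by simp
qed

lemma unitary2_mult_adjoint: "unitary2 U \<Longrightarrow> U * mat_adjoint U = 1\<^sub>m 2"
  unfolding unitary2_def
  using mat_adjoint_carrier[of U 2 2] mat_mult_left_right_inverse[of "mat_adjoint U" 2 U] by blast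

lemma unitary2_adjoint: "unitary2 U \<Longrightarrow> unitary2 (mat_adjoint U)"
proof -
  assume U: "unitary2 U"
  then obtain a b c d where "U = mat2 a b c d"
    using mat2_cases unitary2_carrier by blast
  then show ?thesis
    using unitary2_mult_adjoint[OF U] unfolding unitary2_def one_mat2 by (simp add: mat2_eq_iff)
qed

lemma mat_adjoint_mult2:
  "(A :: complex mat) \<in> carrier_mat 2 2 \<Longrightarrow> B \<in> carrier_mat 2 2 \<Longrightarrow>
   mat_adjoint (A * B) = mat_adjoint B * mat_adjoint A"
proof -
  assume "A \<in> carrier_mat 2 2" "B \<in> carrier_mat 2 2"
  then obtain a b c d e f g h where "A = mat2 a b c d" "B = mat2 e f g h"
    by (metis mat2_cases)
  then show ?thesis
    by (simp add: mat2_eq_iff ac_simps)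
qed

lemma unitary2_mult:
  assumes "unitary2 A" "unitary2 B"
  shows "unitary2 (A * B)"
proof -
  have A: "A \<in> carrier_mat 2 2" and B: "B \<in> carrier_mat 2 2"
    using assms unitary2_carrier by auto
  have "mat_adjoint (A * B) * (A * B) = mat_adjoint B * (mat_adjoint A * A) * B"
    using A B mat_adjoint_carrier[OF A] mat_adjoint_carrier[OF B]
    by (simp add: mat_adjoint_mult2 assoc_mult_mat[of _ 2 2 _ 2 _ 2])
  also have "\<dots> = 1\<^sub>m 2"
    using assms B mat_adjoint_carrier[OF B] unfolding unitary2_def by simp
  finally show ?thesis
    unfolding unitary2_def using A B by simp
qed

lemma gate_mat_Single: "gate_mat n (Single t U) = mux_mat n t (\<lambda>_. U)"
  unfolding mux_mat_def by (simp add: agree_except_iff_qbit)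

lemma gate_mat_CNOT:
  assumes "c \<noteq> t"
  shows "gate_mat n (CNOT c t) = mux_mat n t (\<lambda>a. if qbit a c = 1 then X_gate else 1\<^sub>m 2)"
proof (rule eq_matI)
  fix a b
  assume "a < dim_row (mux_mat n t (\<lambda>a. if qbit a c = 1 then X_gate else 1\<^sub>m 2))"
    "b < dim_col (mux_mat n t (\<lambda>a. if qbit a c = 1 then X_gate else 1\<^sub>m 2))"
  then have a: "a < 2 ^ n" and b: "b < 2 ^ n" by auto
  have control: "agree_except t a b \<Longrightarrow> qbit a c = qbit b c"
    using agree_except_qbit_eq assms by blast
  have mux: "mux_mat n t (\<lambda>a. if qbit a c = 1 then X_gate else 1\<^sub>m 2) $$ (a, b) =
     (if agree_except t a b then (if qbit a c = 1 then X_gate else 1\<^sub>m 2) $$ (qbit a t, qbit b t) else 0)"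
    using a b by (simp add: mux_mat_index)
  have gate: "gate_mat n (CNOT c t) $$ (a, b) = (if a = (if qbit b c = 1 then flip t b else b) then 1 else 0)"
    using a b by simp
  show "gate_mat n (CNOT c t) $$ (a, b)
      = mux_mat n t (\<lambda>a. if qbit a c = 1 then X_gate else 1\<^sub>m 2) $$ (a, b)"
  proof (cases "qbit b c = 1")
    case True
    have "a = flip t b \<longleftrightarrow> agree_except t a b \<and> qbit a t = 1 - qbit b t"
      unfolding flip_eq_set_qbit by (rule eq_set_qbit_iff) simp
    then show ?thesis
      unfolding gate mux using True control qbit_cases[of a t] qbit_cases[of b t]
      by (auto simp: X_gate_def)
  next
    case False
    have "a = b \<longleftrightarrow> agree_except t a b \<and> qbit a t = qbit b t"
      using agree_except_eqI by auto
    then show ?thesis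
      unfolding gate mux using False control qbit_cases[of a t] qbit_cases[of b t]
      by (auto simp: one_mat2)
  qed
qed auto

lemma controlled_gate_eq_mux:
  assumes "p < 2 ^ n"
  shows "controlled_gate n t p U = mux_mat n t (\<lambda>a. if agree_except t a p then U else 1\<^sub>m 2)"
proof (rule eq_matI)
  fix a b
  assume "a < dim_row (mux_mat n t (\<lambda>a. if agree_except t a p then U else 1\<^sub>m 2))"
    "b < dim_col (mux_mat n t (\<lambda>a. if agree_except t a p then U else 1\<^sub>m 2))"
  then have a: "a < 2 ^ n" and b: "b < 2 ^ n" by auto
  have pattern: "(\<forall>q<n. q \<noteq> t \<longrightarrow> qbit a q = qbit p q \<and> qbit b q = qbit p q)
      \<longleftrightarrow> agree_except t a p \<and> agree_except t b p"
    using agree_except_iff_qbit_less[OF a assms, of t] agree_except_iff_qbit_less[OF b assms, of t]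
    by blast
  have gate: "controlled_gate n t p U $$ (a, b) = (if agree_except t a p \<and> agree_except t b p
      then U $$ (qbit a t, qbit b t) else (if a = b then 1 else 0))"
    unfolding controlled_gate_def using a b pattern by simp
  have mux: "mux_mat n t (\<lambda>a. if agree_except t a p then U else 1\<^sub>m 2) $$ (a, b) =
     (if agree_except t a b then (if agree_except t a p then U else 1\<^sub>m 2) $$ (qbit a t, qbit b t) else 0)"
    using a b by (simp add: mux_mat_index)
  show "controlled_gate n t p U $$ (a, b)
      = mux_mat n t (\<lambda>a. if agree_except t a p then U else 1\<^sub>m 2) $$ (a, b)"
  proof (cases "agree_except t a p \<and> agree_except t b p")
    case True
    then have "agree_except t a b"
      using agree_except_sym agree_except_trans by blast
    then show ?thesis
      unfolding gate mux using True by simp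
  next
    case False
    show ?thesis
    proof (cases "agree_except t a b")
      case True
      then have "\<not> agree_except t a p"
        using False agree_except_sym agree_except_trans by blast
      moreover have "a = b \<longleftrightarrow> qbit a t = qbit b t"
        using agree_except_eqI True by auto
      ultimately show ?thesis
        unfolding gate mux using True False qbit_cases[of a t] qbit_cases[of b t]
        by (auto simp: one_mat2)
    next
      case False
      then have "\<not> (agree_except t a p \<and> agree_except t b p)"
        using agree_except_sym agree_except_trans by blast
      moreover have "a \<noteq> b"
        using False by auto
      ultimately show ?thesis
        unfolding gate mux using False by auto
    qed
  qed
qed (auto simp: controlled_gate_def)

definition unitary_mat :: "nat \<Rightarrow> complex mat \<Rightarrow> bool" where
  "unitary_mat m A \<longleftrightarrow> A \<in> carrier_mat m m \<and> mat_adjoint A * A = 1\<^sub>m m"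

lemma mux_mat_unitary:
  assumes "t < n" "indep_of_qbit t B" "\<And>a. unitary2 (B a)"
  shows "unitary_mat (2 ^ n) (mux_mat n t B)"
proof -
  have carrier: "\<And>a. B a \<in> carrier_mat 2 2"
    using assms(3) unitary2_carrier by blast
  have "mat_adjoint (mux_mat n t B) * mux_mat n t B = mux_mat n t (\<lambda>a. mat_adjoint (B a) * B a)"
    unfolding mux_mat_adjoint[OF assms(2) carrier]
    by (rule mux_mat_mult[OF assms(1,2)]) (auto simp: mat_adjoint_carrier carrier)
  also have "\<dots> = 1\<^sub>m (2 ^ n)"
    using assms(3) mux_mat_one unfolding unitary2_def by simp
  finally show ?thesis
    unfolding unitary_mat_def by simp
qed

lemma gate_mat_carrier [simp]: "gate_mat n g \<in> carrier_mat (2 ^ n) (2 ^ n)"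
  by (cases g) auto

lemma gate_mat_unitary:
  assumes "wf_gate n g"
  shows "unitary_mat (2 ^ n) (gate_mat n g)"
proof (cases g)
  case (Single t U)
  then show ?thesis
    using assms mux_mat_unitary[OF _ indep_of_qbit_const] by (simp only: gate_mat_Single) simp
next
  case (CNOT c t)
  have "unitary_mat (2 ^ n) (mux_mat n t (\<lambda>a. if qbit a c = 1 then X_gate else 1\<^sub>m 2))"
    using assms CNOT unitary2_X_gate unitary2_one
    by (intro mux_mat_unitary indep_of_qbit_qbit) auto
  then show ?thesis
    using assms CNOT gate_mat_CNOT by simp
qed

lemma circuit_mat_carrier [simp]: "circuit_mat n C \<in> carrier_mat (2 ^ n) (2 ^ n)"
  by (induction C) auto

lemma circuit_mat_append: "circuit_mat n (C1 @ C2) = circuit_mat n C2 * circuit_mat n C1"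
proof (induction C1)
  case Nil
  then show ?case
    using right_mult_one_mat[of "circuit_mat n C2" "2 ^ n" "2 ^ n"] by simp
next
  case (Cons g C1)
  then show ?case
    by (simp add: assoc_mult_mat[of _ "2 ^ n" "2 ^ n" _ "2 ^ n" _ "2 ^ n"])
qed

lemma circuit_mat_append_mult_vec:
  "v \<in> carrier_vec (2 ^ n) \<Longrightarrow>
   circuit_mat n (C1 @ C2) *\<^sub>v v = circuit_mat n C2 *\<^sub>v (circuit_mat n C1 *\<^sub>v v)"
  by (simp add: circuit_mat_append assoc_mult_mat_vec[of _ "2 ^ n" "2 ^ n" _ "2 ^ n"])

lemma cnot_count_append [simp]: "cnot_count (C1 @ C2) = cnot_count C1 + cnot_count C2"
  unfolding cnot_count_def by simp

lemma cnot_count_Cons [simp]: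
  "cnot_count (Single t U # C) = cnot_count C" "cnot_count (CNOT c t # C) = Suc (cnot_count C)"
  unfolding cnot_count_def by simp_all

lemma wf_circuit_append [simp]: "wf_circuit n (C1 @ C2) \<longleftrightarrow> wf_circuit n C1 \<and> wf_circuit n C2"
  unfolding wf_circuit_def by auto

lemma unitary_mat_preserves_norm:
  assumes "unitary_mat m A" "v \<in> carrier_vec m"
  shows "(A *\<^sub>v v) \<bullet>c (A *\<^sub>v v) = v \<bullet>c v"
proof -
  have A: "A \<in> carrier_mat m m" and U: "mat_adjoint A * A = 1\<^sub>m m"
    using assms(1) unfolding unitary_mat_def by auto
  have dim: "dim_vec v = m"
    using assms(2) by simp
  have orth: "(\<Sum>i<m. cnj (A $$ (i, l)) * A $$ (i, j)) = (if l = j then 1 else 0)"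
    if "l < m" "j < m" for l j
  proof -
    have "(mat_adjoint A * A) $$ (l, j) = (\<Sum>i<m. cnj (A $$ (i, l)) * A $$ (i, j))"
      using that A by (simp add: scalar_prod_def mat_adjoint_index lessThan_atLeast0)
    then show ?thesis
      using U that by simp
  qed
  have Av: "(A *\<^sub>v v) $ i = (\<Sum>j<m. A $$ (i, j) * v $ j)" if "i < m" for i
    using that A dim by (simp add: scalar_prod_def lessThan_atLeast0)
  have "(A *\<^sub>v v) \<bullet>c (A *\<^sub>v v) = (\<Sum>i<m. (A *\<^sub>v v) $ i * cnj ((A *\<^sub>v v) $ i))"
    using A by (simp add: scalar_prod_def lessThan_atLeast0)
  also have "\<dots> = (\<Sum>i<m. (\<Sum>j<m. A $$ (i, j) * v $ j) * (\<Sum>l<m. cnj (A $$ (i, l)) * cnj (v $ l)))"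
    by (rule sum.cong) (simp_all add: Av)
  also have "\<dots> = (\<Sum>i<m. \<Sum>j<m. \<Sum>l<m. v $ j * cnj (v $ l) * (cnj (A $$ (i, l)) * A $$ (i, j)))"
    by (simp add: sum_product ac_simps)
  also have "\<dots> = (\<Sum>j<m. \<Sum>l<m. \<Sum>i<m. v $ j * cnj (v $ l) * (cnj (A $$ (i, l)) * A $$ (i, j)))"
    by (subst sum.swap, subst (2) sum.swap, rule refl)
  also have "\<dots> = (\<Sum>j<m. \<Sum>l<m. v $ j * cnj (v $ l) * (if l = j then 1 else 0))"
    by (intro sum.cong refl) (simp add: sum_distrib_left[symmetric] orth)
  also have "\<dots> = v \<bullet>c v"
    using dim by (simp add: scalar_prod_def lessThan_atLeast0 if_distrib cong: if_cong)
  finally show ?thesis .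
qed

lemma circuit_mat_preserves_norm:
  "wf_circuit n C \<Longrightarrow> v \<in> carrier_vec (2 ^ n) \<Longrightarrow>
   (circuit_mat n C *\<^sub>v v) \<bullet>c (circuit_mat n C *\<^sub>v v) = v \<bullet>c v"
proof (induction C arbitrary: v)
  case Nil
  then show ?case by simp
next
  case (Cons g C)
  then have "wf_gate n g" "wf_circuit n C"
    unfolding wf_circuit_def by auto
  moreover have "circuit_mat n (g # C) *\<^sub>v v = circuit_mat n C *\<^sub>v (gate_mat n g *\<^sub>v v)"
    using Cons.prems by (simp add: assoc_mult_mat_vec[of _ "2 ^ n" "2 ^ n" _ "2 ^ n"])
  ultimately show ?case
    using Cons.IH[of "gate_mat n g *\<^sub>v v"] Cons.prems(2)
      mult_mat_vec_carrier[OF gate_mat_carrier Cons.prems(2)] unitary_mat_preserves_norm[OF gate_mat_unitary[of n g]] by simp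
qed

section \<open>A pair of single-qubit unitaries up to phases\<close>

definition phase_of :: "complex \<Rightarrow> complex" where
  "phase_of z = (if z = 0 then 1 else z / complex_of_real (cmod z))"

lemma cnj_mult_self: "cnj z * z = complex_of_real ((cmod z)\<^sup>2)"
  using complex_norm_square[of z] by (simp add: mult.commute)

lemma cnj_mult_self_eq_1: "cmod x = 1 \<Longrightarrow> cnj x * x = 1"
  using cnj_mult_self[of x] by simp

lemma cnj_phase_of_mult: "cnj (phase_of z) * z = complex_of_real (cmod z)"
proof (cases "z = 0")
  case False
  have "cnj (phase_of z) * z = cnj z * z / complex_of_real (cmod z)"
    using False by (simp add: phase_of_def)
  also have "\<dots> = complex_of_real ((cmod z)\<^sup>2) / complex_of_real (cmod z)"
    by (simp only: cnj_mult_self)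
  finally show ?thesis
    using False by (simp add: power2_eq_square)
qed (simp add: phase_of_def)

lemma phase_of_mult_cmod: "phase_of z * complex_of_real (cmod z) = z"
  by (simp add: phase_of_def)

lemma cmod_phase_of: "cmod (phase_of z) = 1"
  by (simp add: phase_of_def norm_divide)

lemma sum_cmod_sq_eq_1: "cnj x * x + cnj y * y = 1 \<Longrightarrow> (cmod x)\<^sup>2 + (cmod y)\<^sup>2 = 1"
  unfolding cnj_mult_self by (metis of_real_add of_real_eq_1_iff)

definition diag_phase2 :: "complex mat \<Rightarrow> bool" where
  "diag_phase2 E \<longleftrightarrow> (\<exists>x y. E = mat2 x 0 0 y \<and> cmod x = 1 \<and> cmod y = 1)"

lemma diag_phase2_one: "diag_phase2 (1\<^sub>m 2)"
  unfolding diag_phase2_def one_mat2 by (rule exI[of _ 1], rule exI[of _ 1]) simp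

lemma diag_phase2_carrier: "diag_phase2 E \<Longrightarrow> E \<in> carrier_mat 2 2"
  unfolding diag_phase2_def by auto

lemma diag_phase2_unitary: "diag_phase2 E \<Longrightarrow> unitary2 E"
  unfolding diag_phase2_def by (auto simp: unitary2_mat2_iff cnj_mult_self_eq_1)

lemma diag_phase2_mult: "diag_phase2 A \<Longrightarrow> diag_phase2 B \<Longrightarrow> diag_phase2 (A * B)"
proof -
  assume "diag_phase2 A" "diag_phase2 B"
  then obtain x y x' y' where "A = mat2 x 0 0 y" "B = mat2 x' 0 0 y'"
    and "cmod x = 1" "cmod y = 1" "cmod x' = 1" "cmod y' = 1"
    unfolding diag_phase2_def by blast
  then have "A * B = mat2 (x * x') 0 0 (y * y')" "cmod (x * x') = 1" "cmod (y * y') = 1"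
    by (simp_all add: norm_mult)
  then show ?thesis
    unfolding diag_phase2_def by blast
qed

text \<open>\<open>V\<close> is the rotation by half the angle of \<open>(a, |\<beta>|)\<close>, twisted by the phase of \<open>\<beta>\<close>.\<close>

lemma reflection_similar_Z_gate:
  fixes a :: real and \<beta> :: complex
  assumes "0 \<le> a" "a\<^sup>2 + (cmod \<beta>)\<^sup>2 = 1"
  shows "\<exists>V. unitary2 V \<and> V * Z_gate * mat_adjoint V = mat2 a \<beta> (cnj \<beta>) (- a)"
proof -
  have "a\<^sup>2 \<le> 1"
    using assms(2) zero_le_power2[of "cmod \<beta>"] by linarith
  then have "a \<le> 1"
    using power2_le_imp_le[of a 1] by simp
  define C where "C = complex_of_real (sqrt ((1 + a) / 2))"
  define S where "S = complex_of_real (sqrt ((1 - a) / 2))"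
  define e where "e = phase_of \<beta>"
  have CC: "C * C = (1 + a) / 2" and SS: "S * S = (1 - a) / 2"
    unfolding C_def S_def using assms(1) \<open>a \<le> 1\<close> by (simp_all flip: of_real_mult)
  have "sqrt ((1 + a) / 2) * sqrt ((1 - a) / 2) = sqrt ((cmod \<beta> / 2)\<^sup>2)"
    using assms(2) by (simp add: power2_eq_square field_simps flip: real_sqrt_mult)
  then have "2 * (sqrt ((1 + a) / 2) * sqrt ((1 - a) / 2)) = cmod \<beta>"
    by simp
  then have CS: "2 * (C * S) = cmod \<beta>"
    unfolding C_def S_def by (metis of_real_mult of_real_numeral)
  have ee: "e * cnj e = 1" "cnj e * e = 1"
    unfolding e_def using cnj_mult_self_eq_1[OF cmod_phase_of] by (auto simp: mult.commute)
  have e\<beta>1: "e * cmod \<beta> = \<beta>"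
    unfolding e_def by (rule phase_of_mult_cmod)
  have e\<beta>2: "cnj e * cmod \<beta> = cnj \<beta>"
    using arg_cong[OF e\<beta>1, of cnj] by simp
  have real: "cnj C = C" "cnj S = S"
    unfolding C_def S_def by simp_all
  define V where "V = mat2 C (- (e * S)) (cnj e * S) C"
  have "C * C + S * S = 1"
    unfolding CC SS by (simp add: field_simps)
  moreover have "cnj (cnj e * S) * (cnj e * S) = (e * cnj e) * (S * S)"
    "cnj (- (e * S)) * (- (e * S)) = (cnj e * e) * (S * S)"
    by (simp_all add: real ac_simps)
  ultimately have "unitary2 V"
    unfolding V_def unitary2_mat2_iff using ee by (simp add: real ac_simps)
  moreover have "V * Z_gate * mat_adjoint V = mat2 (C * C - (e * cnj e) * (S * S))
      (e * (2 * (C * S))) (cnj e * (2 * (C * S))) ((cnj e * e) * (S * S) - C * C)"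
    unfolding V_def Z_gate_def by (simp add: mat2_eq_iff real algebra_simps)
  moreover have "\<dots> = mat2 a \<beta> (cnj \<beta>) (- a)"
    unfolding CS ee e\<beta>1 e\<beta>2 CC SS by (simp add: mat2_eq_iff field_simps)
  ultimately show ?thesis
    by metis
qed

lemma unitary2_rows:
  assumes "unitary2 (mat2 p q r s)"
  shows "(cmod p)\<^sup>2 + (cmod r)\<^sup>2 = 1" "(cmod p)\<^sup>2 + (cmod q)\<^sup>2 = 1" "(cmod q)\<^sup>2 + (cmod s)\<^sup>2 = 1"
    and "p * cnj q = - (r * cnj s)"
proof -
  have cols: "cnj p * p + cnj r * r = 1" "cnj p * q + cnj r * s = 0" "cnj q * q + cnj s * s = 1"
    using assms unfolding unitary2_mat2_iff by auto
  have "mat2 p q r s * mat_adjoint (mat2 p q r s) = 1\<^sub>m 2"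
    by (rule unitary2_mult_adjoint[OF assms])
  then have "cnj p * p + cnj q * q = 1"
    unfolding one_mat2 by (simp add: mat2_eq_iff mult.commute)
  then show "(cmod p)\<^sup>2 + (cmod r)\<^sup>2 = 1" "(cmod p)\<^sup>2 + (cmod q)\<^sup>2 = 1" "(cmod q)\<^sup>2 + (cmod s)\<^sup>2 = 1"
    using cols sum_cmod_sq_eq_1 by auto
  have "cnj (cnj p * q + cnj r * s) = 0"
    using cols(2) by simp
  then show "p * cnj q = - (r * cnj s)"
    by (simp add: add_eq_0_iff mult.commute)
qed

lemma unitary2_phase_reflection:
  assumes "unitary2 M"
  obtains E a \<beta> where "diag_phase2 E" "0 \<le> a" "a\<^sup>2 + (cmod \<beta>)\<^sup>2 = 1"
    "E * M = mat2 a \<beta> (cnj \<beta>) (- a)"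
proof -
  obtain p q r s where M: "M = mat2 p q r s"
    using mat2_cases unitary2_carrier[OF assms] by blast
  note rows = unitary2_rows[OF assms[unfolded M]]
  have rq: "cmod r = cmod q" and sp: "cmod s = cmod p"
    using rows(1-3) by (simp_all add: power2_eq_imp_eq)
  define u where "u = cnj (phase_of p)"
  define w where "w = (if p = 0 then cnj (u * q) * cnj r else - cnj (phase_of s))"
  have up: "u * p = cmod p" and cu: "cmod u = 1"
    unfolding u_def using cnj_phase_of_mult cmod_phase_of by simp_all
  have w: "w * s = - cmod p \<and> w * r = cnj (u * q) \<and> cmod w = 1"
  proof (cases "p = 0")
    case True
    then have "s = 0" "u = 1" "cmod r = 1" "cmod q = 1"
      using sp rows(1) rq norm_ge_zero[of r] unfolding u_def by (auto simp: phase_of_def power2_eq_1_iff)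
    then show ?thesis
      using True cnj_mult_self_eq_1[of r] unfolding w_def by (simp add: norm_mult ac_simps)
  next
    case False
    then have "s \<noteq> 0"
      using sp by auto
    have "cnj (u * q) = p * cnj q / cmod p"
      using False unfolding u_def by (simp add: phase_of_def)
    also have "\<dots> = w * r"
      unfolding rows(4) sp[symmetric] w_def using False \<open>s \<noteq> 0\<close> by (simp add: phase_of_def)
    finally show ?thesis
      using False cnj_phase_of_mult[of s] sp cmod_phase_of unfolding w_def by simp
  qed
  show ?thesis
  proof
    show "diag_phase2 (mat2 u 0 0 w)"
      unfolding diag_phase2_def using cu w by blast
    show "(cmod p)\<^sup>2 + (cmod (u * q))\<^sup>2 = 1"
      using rows(2) cu by (simp add: norm_mult)
    show "mat2 u 0 0 w * M = mat2 (cmod p) (u * q) (cnj (u * q)) (- cmod p)"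
      unfolding M using up w by (simp add: mat2_eq_iff)
  qed simp
qed

text \<open>Diagonalise the reflection obtained from \<open>U\<^sub>1 U\<^sub>0\<^sup>\<dagger>\<close>.\<close>

lemma unitary2_pair_decomp:
  assumes U0: "unitary2 U0" and U1: "unitary2 U1"
  obtains E V W where "diag_phase2 E" "unitary2 V" "unitary2 W"
    "U0 = V * W" "E * U1 = V * Z_gate * W"
proof -
  have carrier: "U0 \<in> carrier_mat 2 2" "U1 \<in> carrier_mat 2 2" "mat_adjoint U0 \<in> carrier_mat 2 2"
    using U0 U1 unitary2_carrier mat_adjoint_carrier by blast+
  obtain E a \<beta> where E: "diag_phase2 E" "0 \<le> a" "a\<^sup>2 + (cmod \<beta>)\<^sup>2 = 1"
    and refl: "E * (U1 * mat_adjoint U0) = mat2 a \<beta> (cnj \<beta>) (- a)"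
    using unitary2_phase_reflection unitary2_mult[OF U1 unitary2_adjoint[OF U0]] by metis
  obtain V where V: "unitary2 V" and VZV: "V * Z_gate * mat_adjoint V = mat2 a \<beta> (cnj \<beta>) (- a)"
    using reflection_similar_Z_gate[OF E(2,3)] by blast
  define W where "W = mat_adjoint V * U0"
  have carrierV: "V \<in> carrier_mat 2 2" "mat_adjoint V \<in> carrier_mat 2 2" "Z_gate \<in> carrier_mat 2 2"
    "E \<in> carrier_mat 2 2"
    using V unitary2_carrier mat_adjoint_carrier diag_phase2_carrier[OF E(1)]
    by (auto simp: Z_gate_def)
  have "unitary2 W"
    unfolding W_def by (rule unitary2_mult[OF unitary2_adjoint[OF V] U0])
  moreover have "U0 = V * W"
  proof -
    have "V * W = V * mat_adjoint V * U0"
      unfolding W_def using carrier carrierV by (simp add: assoc_mult_mat[of _ 2 2 _ 2 _ 2])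
    then show ?thesis
      using unitary2_mult_adjoint[OF V] carrier by simp
  qed
  moreover have "E * U1 = V * Z_gate * W"
  proof -
    have "E * U1 = E * (U1 * mat_adjoint U0) * U0"
      using U0 carrier carrierV unfolding unitary2_def
      by (simp add: assoc_mult_mat[of _ 2 2 _ 2 _ 2])
    also have "\<dots> = V * Z_gate * W"
      unfolding refl VZV[symmetric] W_def using carrier carrierV
      by (simp add: assoc_mult_mat[of _ 2 2 _ 2 _ 2])
    finally show ?thesis .
  qed
  ultimately show ?thesis
    using that E(1) V by blast
qed

section \<open>Uniformly controlled single-qubit gates\<close>

definition ucg_mat :: "nat \<Rightarrow> nat \<Rightarrow> nat \<Rightarrow> (nat \<Rightarrow> complex mat) \<Rightarrow> complex mat" where
  "ucg_mat n t j G = mux_mat n t (\<lambda>a. G (a div 2 ^ Suc t mod 2 ^ j))"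

lemma indep_of_qbit_ucg: "indep_of_qbit t (\<lambda>a. G (a div 2 ^ Suc t mod 2 ^ j))"
  unfolding indep_of_qbit_def agree_except_def by simp

lemma div_mod_pow_Suc:
  "a div 2 ^ Suc t mod 2 ^ Suc j = a div 2 ^ Suc t mod 2 ^ j + 2 ^ j * qbit a (t + Suc j)"
proof -
  have "(2::nat) ^ Suc t * 2 ^ j = 2 ^ (t + Suc j)"
    by (simp only: power_add[symmetric]) simp
  then have "a div 2 ^ Suc t div 2 ^ j = a div 2 ^ (t + Suc j)"
    by (simp only: div_mult2_eq[symmetric])
  then show ?thesis
    using mod_mult2_eq[of "a div 2 ^ Suc t" "2 ^ j" 2] unfolding qbit_def by (simp add: power_Suc2)
qed

lemma H_CNOT_H_circuit:
  assumes "c \<noteq> t" "t < n"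
  shows "circuit_mat n [Single t H_gate, CNOT c t, Single t H_gate]
    = mux_mat n t (\<lambda>a. mat2 1 0 0 (if qbit a c = 1 then -1 else 1))"
proof -
  have carrier: "H_gate \<in> carrier_mat 2 2" "\<And>a. (if qbit a c = 1 then X_gate else 1\<^sub>m 2) \<in> carrier_mat 2 2"
    unfolding H_gate_def X_gate_def one_mat2 Let_def by simp_all
  have "circuit_mat n [Single t H_gate, CNOT c t, Single t H_gate]
      = mux_mat n t (\<lambda>_. H_gate) * mux_mat n t (\<lambda>a. if qbit a c = 1 then X_gate else 1\<^sub>m 2)
        * mux_mat n t (\<lambda>_. H_gate)"
    by (simp only: circuit_mat.simps gate_mat_Single gate_mat_CNOT[OF assms(1)]
        left_mult_one_mat[OF mux_mat_carrier])
  also have "\<dots> = mux_mat n t (\<lambda>a. H_gate * (if qbit a c = 1 then X_gate else 1\<^sub>m 2))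
      * mux_mat n t (\<lambda>_. H_gate)"
    by (subst mux_mat_mult[OF assms(2) indep_of_qbit_qbit[OF assms(1)]]) (use carrier in auto)
  also have "\<dots> = mux_mat n t (\<lambda>a. H_gate * (if qbit a c = 1 then X_gate else 1\<^sub>m 2) * H_gate)"
    by (rule mux_mat_mult[OF assms(2) indep_of_qbit_const]) (use carrier in auto)
  also have "\<dots> = mux_mat n t (\<lambda>a. mat2 1 0 0 (if qbit a c = 1 then -1 else 1))"
    by (rule mux_mat_cong) (auto simp: H_gate_conj Z_gate_def one_mat2[symmetric])
  finally show ?thesis .
qed

lemma ucg_mat_Suc:
  assumes "t + Suc j < n" "\<And>h. h < 2 ^ j \<Longrightarrow> A h \<in> carrier_mat 2 2"
    and "\<And>h. h < 2 ^ j \<Longrightarrow> B h \<in> carrier_mat 2 2"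
  shows "ucg_mat n t j A * mux_mat n t (\<lambda>a. mat2 1 0 0 (if qbit a (t + Suc j) = 1 then -1 else 1))
      * ucg_mat n t j B
    = ucg_mat n t (Suc j) (\<lambda>h. A (h mod 2 ^ j) * mat2 1 0 0 (if h < 2 ^ j then 1 else -1) * B (h mod 2 ^ j))"
proof -
  let ?k = "\<lambda>a. a div 2 ^ Suc t mod 2 ^ j"
  let ?D = "\<lambda>a. mat2 1 0 0 (if qbit a (t + Suc j) = 1 then -1 else 1)"
  have A: "A (?k a) \<in> carrier_mat 2 2" and B: "B (?k a) \<in> carrier_mat 2 2" for a
    using assms(2,3) by simp_all
  have t: "t < n" and c: "t + Suc j \<noteq> t"
    using assms(1) by simp_all
  have "ucg_mat n t j A * mux_mat n t ?D * ucg_mat n t j B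
      = mux_mat n t (\<lambda>a. A (?k a) * ?D a) * mux_mat n t (\<lambda>a. B (?k a))"
    unfolding ucg_mat_def
    by (subst mux_mat_mult[OF t indep_of_qbit_qbit[OF c]]) (use A in auto)
  also have "\<dots> = mux_mat n t (\<lambda>a. A (?k a) * ?D a * B (?k a))"
    by (rule mux_mat_mult[OF t indep_of_qbit_ucg[of t B j]]) (use mult_carrier_mat[OF A mat2_carrier] B in auto)
  also have "\<dots> = ucg_mat n t (Suc j)
      (\<lambda>h. A (h mod 2 ^ j) * mat2 1 0 0 (if h < 2 ^ j then 1 else -1) * B (h mod 2 ^ j))"
    unfolding ucg_mat_def div_mod_pow_Suc
  proof (rule mux_mat_cong)
    fix a
    show "A (?k a) * ?D a * B (?k a) = A ((?k a + 2 ^ j * qbit a (t + Suc j)) mod 2 ^ j)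
        * mat2 1 0 0 (if ?k a + 2 ^ j * qbit a (t + Suc j) < 2 ^ j then 1 else -1)
        * B ((?k a + 2 ^ j * qbit a (t + Suc j)) mod 2 ^ j)"
      using qbit_cases[of a "t + Suc j"] by auto
  qed
  finally show ?thesis .
qed

lemma diag_phase2_adjoint_conj:
  assumes "diag_phase2 E" "W \<in> carrier_mat 2 2"
  shows "mat_adjoint E * (mat2 z1 0 0 z2 * (E * W)) = mat2 z1 0 0 z2 * W"
proof -
  obtain x y where E: "E = mat2 x 0 0 y" "cmod x = 1" "cmod y = 1"
    using assms(1) unfolding diag_phase2_def by blast
  obtain w1 w2 w3 w4 where W: "W = mat2 w1 w2 w3 w4"
    using mat2_cases[OF assms(2)] by blast
  have cancel: "cnj u * (z * (u * w)) = z * w" if "cmod u = 1" for u z w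
  proof -
    have "cnj u * (z * (u * w)) = (cnj u * u) * (z * w)"
      by (simp only: ac_simps)
    then show ?thesis
      using cnj_mult_self_eq_1[OF that] by simp
  qed
  show ?thesis
    unfolding E(1) W by (simp add: cancel[OF E(2)] cancel[OF E(3)])
qed

lemma mult_adjoint_diag_phase2_cancel:
  assumes "diag_phase2 E" "X \<in> carrier_mat 2 2" "V \<in> carrier_mat 2 2" "W \<in> carrier_mat 2 2"
  shows "X * (V * mat_adjoint E) * mat2 z1 0 0 z2 * (E * W) = X * (V * (mat2 z1 0 0 z2 * W))"
proof -
  have E: "E \<in> carrier_mat 2 2" "mat_adjoint E \<in> carrier_mat 2 2"
    using diag_phase2_carrier[OF assms(1)] mat_adjoint_carrier by blast+
  have "X * (V * mat_adjoint E) * mat2 z1 0 0 z2 * (E * W)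
      = X * (V * (mat_adjoint E * (mat2 z1 0 0 z2 * (E * W))))"
    using assms(2-4) E by (simp add: assoc_mult_mat[of _ 2 2 _ 2 _ 2])
  then show ?thesis
    unfolding diag_phase2_adjoint_conj[OF assms(1,4)] .
qed

lemma unitary2_pair_decomp_family:
  assumes "\<And>h. h < m \<Longrightarrow> unitary2 (U0 h)" "\<And>h. h < m \<Longrightarrow> unitary2 (U1 h)"
  obtains E V W where "\<And>h. h < m \<Longrightarrow> diag_phase2 (E h)"
    "\<And>h. h < m \<Longrightarrow> unitary2 (V h)" "\<And>h. h < m \<Longrightarrow> unitary2 (W h)"
    "\<And>h. h < m \<Longrightarrow> U0 h = V h * W h" "\<And>h. h < m \<Longrightarrow> E h * U1 h = V h * Z_gate * W h"
proof -
  have "\<forall>h\<in>{..<m}. \<exists>x. diag_phase2 (fst x) \<and> unitary2 (fst (snd x)) \<and> unitary2 (snd (snd x))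
      \<and> U0 h = fst (snd x) * snd (snd x) \<and> fst x * U1 h = fst (snd x) * Z_gate * snd (snd x)"
  proof
    fix h
    assume "h \<in> {..<m}"
    then obtain E V W where "diag_phase2 E" "unitary2 V" "unitary2 W" "U0 h = V * W"
      "E * U1 h = V * Z_gate * W"
      using unitary2_pair_decomp assms by (metis lessThan_iff)
    then show "\<exists>x. diag_phase2 (fst x) \<and> unitary2 (fst (snd x)) \<and> unitary2 (snd (snd x))
      \<and> U0 h = fst (snd x) * snd (snd x) \<and> fst x * U1 h = fst (snd x) * Z_gate * snd (snd x)"
      by (intro exI[of _ "(E, V, W)"]) simp
  qed
  from bchoice[OF this] obtain f where "\<forall>h\<in>{..<m}. diag_phase2 (fst (f h)) \<and> unitary2 (fst (snd (f h)))
      \<and> unitary2 (snd (snd (f h))) \<and> U0 h = fst (snd (f h)) * snd (snd (f h))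
      \<and> fst (f h) * U1 h = fst (snd (f h)) * Z_gate * snd (snd (f h))"
    by blast
  then show ?thesis
    by (intro that[of "\<lambda>h. fst (f h)" "\<lambda>h. fst (snd (f h))" "\<lambda>h. snd (snd (f h))"]) auto
qed

text \<open>The demultiplexing identity behind the recursion: \<open>F h = V W\<close> and \<open>F (h + 2 ^ j) \<sim> V Z W\<close>
  turn a uniformly controlled gate with \<open>j + 1\<close> controls into two with \<open>j\<close> controls around a
  controlled \<open>Z\<close>. The phases \<open>EW\<close> left over by the \<open>W\<close>'s commute with \<open>Z\<close> and are absorbed
  into the \<open>V\<close>'s.\<close>

lemma ucg_mat_demux:
  assumes "t + Suc j < n"
    and EV: "\<And>h. h < 2 ^ j \<Longrightarrow> diag_phase2 (EV h)" and EW: "\<And>h. h < 2 ^ j \<Longrightarrow> diag_phase2 (EW h)"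
    and EZ: "\<And>h. h < 2 ^ j \<Longrightarrow> diag_phase2 (EZ h)"
    and V: "\<And>h. h < 2 ^ j \<Longrightarrow> unitary2 (V h)" and W: "\<And>h. h < 2 ^ j \<Longrightarrow> unitary2 (W h)"
    and F0: "\<And>h. h < 2 ^ j \<Longrightarrow> F h = V h * W h"
    and F1: "\<And>h. h < 2 ^ j \<Longrightarrow> EZ h * F (h + 2 ^ j) = V h * Z_gate * W h"
    and F: "\<And>h. h < 2 ^ Suc j \<Longrightarrow> F h \<in> carrier_mat 2 2"
  shows "ucg_mat n t j (\<lambda>h. EV h * (V h * mat_adjoint (EW h)))
      * mux_mat n t (\<lambda>a. mat2 1 0 0 (if qbit a (t + Suc j) = 1 then -1 else 1))
      * ucg_mat n t j (\<lambda>h. EW h * W h)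
    = ucg_mat n t (Suc j) (\<lambda>h. EV (h mod 2 ^ j) * (if h < 2 ^ j then 1\<^sub>m 2 else EZ (h mod 2 ^ j)) * F h)"
proof -
  have carrier: "EV h \<in> carrier_mat 2 2 \<and> V h \<in> carrier_mat 2 2 \<and> W h \<in> carrier_mat 2 2
      \<and> EZ h \<in> carrier_mat 2 2 \<and> EW h \<in> carrier_mat 2 2" if "h < 2 ^ j" for h
    using that EV EW EZ V W diag_phase2_carrier unitary2_carrier by blast
  have block: "EV (h mod 2 ^ j) * (V (h mod 2 ^ j) * mat_adjoint (EW (h mod 2 ^ j)))
      * mat2 1 0 0 (if h < 2 ^ j then 1 else -1) * (EW (h mod 2 ^ j) * W (h mod 2 ^ j))
    = EV (h mod 2 ^ j) * (if h < 2 ^ j then 1\<^sub>m 2 else EZ (h mod 2 ^ j)) * F h"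
    if "h < 2 ^ Suc j" for h
  proof -
    define h' where "h' = h mod 2 ^ j"
    have h': "h' < 2 ^ j"
      unfolding h'_def by simp
    note c = carrier[OF h']
    have "EV h' * (V h' * mat_adjoint (EW h')) * mat2 1 0 0 (if h < 2 ^ j then 1 else -1) * (EW h' * W h')
        = EV h' * (V h' * (mat2 1 0 0 (if h < 2 ^ j then 1 else -1) * W h'))"
      using mult_adjoint_diag_phase2_cancel EW[OF h'] c by blast
    also have "\<dots> = EV h' * (if h < 2 ^ j then 1\<^sub>m 2 else EZ h') * F h"
    proof (cases "h < 2 ^ j")
      case True
      then show ?thesis
        using c F0[OF True] right_mult_one_mat[of "EV h" 2 2] left_mult_one_mat[of "W h" 2 2]
        unfolding h'_def by (simp add: one_mat2[symmetric] assoc_mult_mat[of _ 2 2 _ 2 _ 2])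
    next
      case False
      then have "h mod 2 ^ j = h - 2 ^ j"
        using that by (simp add: le_mod_geq power_Suc)
      then have "h = h' + 2 ^ j"
        using False unfolding h'_def by simp
      then show ?thesis
        using False c F[OF that] F1[OF h']
        by (simp add: Z_gate_def assoc_mult_mat[of _ 2 2 _ 2 _ 2])
    qed
    finally show ?thesis
      unfolding h'_def .
  qed
  have "ucg_mat n t j (\<lambda>h. EV h * (V h * mat_adjoint (EW h)))
      * mux_mat n t (\<lambda>a. mat2 1 0 0 (if qbit a (t + Suc j) = 1 then -1 else 1))
      * ucg_mat n t j (\<lambda>h. EW h * W h)
    = ucg_mat n t (Suc j) (\<lambda>h. EV (h mod 2 ^ j) * (V (h mod 2 ^ j) * mat_adjoint (EW (h mod 2 ^ j)))
      * mat2 1 0 0 (if h < 2 ^ j then 1 else -1) * (EW (h mod 2 ^ j) * W (h mod 2 ^ j)))"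
    by (rule ucg_mat_Suc[OF assms(1)])
      (use carrier in \<open>auto intro!: mult_carrier_mat mat_adjoint_carrier\<close>)
  also have "\<dots> = ucg_mat n t (Suc j)
      (\<lambda>h. EV (h mod 2 ^ j) * (if h < 2 ^ j then 1\<^sub>m 2 else EZ (h mod 2 ^ j)) * F h)"
    unfolding ucg_mat_def by (rule mux_mat_cong) (simp add: block)
  finally show ?thesis .
qed

text \<open>Realise the \<open>W\<close>'s and the \<open>V\<close>'s recursively and the controlled \<open>Z\<close> by one C-NOT between
  Hadamards.\<close>

lemma ucg_circuit:
  assumes "t + j < n" "\<And>h. h < 2 ^ j \<Longrightarrow> unitary2 (F h)"
  shows "\<exists>C E. wf_circuit n C \<and> cnot_count C \<le> 2 ^ j - 1 \<and> (\<forall>h<2 ^ j. diag_phase2 (E h))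
    \<and> circuit_mat n C = ucg_mat n t j (\<lambda>h. E h * F h)"
  using assms
proof (induction j arbitrary: F)
  case 0
  have "circuit_mat n [Single t (F 0)] = mux_mat n t (\<lambda>_. F 0)"
    by (simp only: circuit_mat.simps gate_mat_Single left_mult_one_mat[OF mux_mat_carrier])
  also have "\<dots> = ucg_mat n t 0 (\<lambda>h. 1\<^sub>m 2 * F h)"
    unfolding ucg_mat_def using unitary2_carrier[OF "0.prems"(2)] by (intro mux_mat_cong) simp
  finally have "circuit_mat n [Single t (F 0)] = ucg_mat n t 0 (\<lambda>h. 1\<^sub>m 2 * F h)" .
  moreover have "wf_circuit n [Single t (F 0)]" "cnot_count [Single t (F 0)] \<le> 2 ^ 0 - 1"
    using "0.prems" unfolding wf_circuit_def cnot_count_def by simp_all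
  ultimately show ?case
    using diag_phase2_one by (intro exI[of _ "[Single t (F 0)]"] exI[of _ "\<lambda>_. 1\<^sub>m 2"]) blast
next
  case (Suc j)
  have t: "t < n" "t + j < n" "t + Suc j \<noteq> t"
    using Suc.prems(1) by simp_all
  obtain E1 V W where E1: "\<And>h. h < 2 ^ j \<Longrightarrow> diag_phase2 (E1 h)"
    and V: "\<And>h. h < 2 ^ j \<Longrightarrow> unitary2 (V h)" and W: "\<And>h. h < 2 ^ j \<Longrightarrow> unitary2 (W h)"
    and F0: "\<And>h. h < 2 ^ j \<Longrightarrow> F h = V h * W h"
    and F1: "\<And>h. h < 2 ^ j \<Longrightarrow> E1 h * F (h + 2 ^ j) = V h * Z_gate * W h"
    using unitary2_pair_decomp_family[of "2 ^ j" F "\<lambda>h. F (h + 2 ^ j)"] Suc.prems(2)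
    by (auto simp: power_Suc)
  obtain CW EW where CW: "wf_circuit n CW" "cnot_count CW \<le> 2 ^ j - 1"
    "\<forall>h<2 ^ j. diag_phase2 (EW h)" "circuit_mat n CW = ucg_mat n t j (\<lambda>h. EW h * W h)"
    using Suc.IH[of W, OF t(2) W] by blast
  have "unitary2 (V h * mat_adjoint (EW h))" if "h < 2 ^ j" for h
    using that CW(3) V by (blast intro: unitary2_mult unitary2_adjoint diag_phase2_unitary)
  then obtain CV EV where CV: "wf_circuit n CV" "cnot_count CV \<le> 2 ^ j - 1"
    "\<forall>h<2 ^ j. diag_phase2 (EV h)"
    "circuit_mat n CV = ucg_mat n t j (\<lambda>h. EV h * (V h * mat_adjoint (EW h)))"
    using Suc.IH[of "\<lambda>h. V h * mat_adjoint (EW h)", OF t(2)] by blast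
  define C where "C = CW @ [Single t H_gate, CNOT (t + Suc j) t, Single t H_gate] @ CV"
  define E where "E h = EV (h mod 2 ^ j) * (if h < 2 ^ j then 1\<^sub>m 2 else E1 (h mod 2 ^ j))" for h
  have "wf_circuit n C"
    unfolding C_def using CW(1) CV(1) t Suc.prems(1) unitary2_H_gate by (auto simp: wf_circuit_def)
  moreover have "cnot_count C \<le> 2 ^ Suc j - 1"
    unfolding C_def using CW(2) CV(2)
    by (simp add: power_Suc) (use zero_less_power[of "2::nat" j] in linarith)
  moreover have "diag_phase2 (E h)" if "h < 2 ^ Suc j" for h
    unfolding E_def using CV(3) E1 diag_phase2_one that
    by (auto intro!: diag_phase2_mult simp: power_Suc less_diff_conv2)
  moreover have "circuit_mat n C = ucg_mat n t (Suc j) (\<lambda>h. E h * F h)"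
    unfolding C_def circuit_mat_append CV(4) CW(4) H_CNOT_H_circuit[OF t(3,1)] E_def
    by (rule ucg_mat_demux[where EV = EV and EW = EW and EZ = E1 and V = V and W = W and F = F])
      (use Suc.prems CV(3) CW(3) E1 V W F0 F1 unitary2_carrier in auto)
  ultimately show ?case
    by blast
qed

section \<open>Clearing one qubit of the target state\<close>

definition givens2 :: "complex \<Rightarrow> complex \<Rightarrow> complex mat" where
  "givens2 a b = (if a = 0 \<and> b = 0 then 1\<^sub>m 2 else
     (let r = complex_of_real (sqrt ((cmod a)\<^sup>2 + (cmod b)\<^sup>2)) in mat2 (cnj a / r) (cnj b / r) (- b / r) (a / r)))"

lemma givens2:
  "unitary2 (givens2 a b)" "givens2 a b $$ (1, 0) * a + givens2 a b $$ (1, 1) * b = 0"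
proof -
  have "unitary2 (givens2 a b) \<and> givens2 a b $$ (1, 0) * a + givens2 a b $$ (1, 1) * b = 0"
  proof (cases "a = 0 \<and> b = 0")
    case True
    then show ?thesis
      unfolding givens2_def by (simp add: unitary2_one)
  next
    case False
    define r where "r = complex_of_real (sqrt ((cmod a)\<^sup>2 + (cmod b)\<^sup>2))"
    have pos: "(cmod a)\<^sup>2 + (cmod b)\<^sup>2 > 0"
      using False by (auto simp: add_pos_nonneg add_nonneg_pos)
    then have "r \<noteq> 0" "cnj r = r"
      unfolding r_def using False by simp_all
    have rr: "r * r = cnj a * a + cnj b * b"
      unfolding r_def cnj_mult_self using pos by (simp del: of_real_mult add: of_real_mult[symmetric])
    then have norm: "(a * cnj a + b * cnj b) / (r * r) = 1"
      using \<open>r \<noteq> 0\<close> by (simp add: mult.commute) (metis mult_eq_0_iff)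
    have G: "givens2 a b = mat2 (cnj a / r) (cnj b / r) (- b / r) (a / r)"
      unfolding givens2_def r_def Let_def if_not_P[OF False] by simp
    have "cnj (cnj a / r) * (cnj a / r) + cnj (- b / r) * (- b / r) = 1"
      "cnj (cnj b / r) * (cnj b / r) + cnj (a / r) * (a / r) = 1"
      using norm \<open>cnj r = r\<close> by (simp_all add: add_divide_distrib ac_simps)
    moreover have "cnj (cnj a / r) * (cnj b / r) + cnj (- b / r) * (a / r) = 0"
      "cnj (cnj b / r) * (cnj a / r) + cnj (a / r) * (- b / r) = 0"
      using \<open>cnj r = r\<close> by (simp_all add: field_simps)
    ultimately have "unitary2 (givens2 a b)"
      unfolding G unitary2_mat2_iff by blast
    moreover have "givens2 a b $$ (1, 0) * a + givens2 a b $$ (1, 1) * b = 0"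
      unfolding G by (simp add: field_simps)
    ultimately show ?thesis
      by blast
  qed
  then show "unitary2 (givens2 a b)" "givens2 a b $$ (1, 0) * a + givens2 a b $$ (1, 1) * b = 0"
    by simp_all
qed

definition givens_to :: "nat \<Rightarrow> complex \<Rightarrow> complex \<Rightarrow> complex mat" where
  "givens_to c a b = (if c = 1 then X_gate * givens2 a b else givens2 a b)"

lemma givens_to_unitary: "unitary2 (givens_to c a b)"
  unfolding givens_to_def using givens2 unitary2_mult unitary2_X_gate by auto

lemma givens_to_row:
  assumes "c < 2"
  shows "givens_to c a b $$ (1 - c, 0) * a + givens_to c a b $$ (1 - c, 1) * b = 0"
proof (cases "c = 1")
  case True
  obtain p q r s where G: "givens2 a b = mat2 p q r s"
    using mat2_cases[OF unitary2_carrier[OF givens2(1)]] by blast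
  then show ?thesis
    using True givens2(2)[of a b] unfolding givens_to_def G by (simp add: X_gate_def)
next
  case False
  then have "c = 0"
    using assms by simp
  then show ?thesis
    using givens2(2)[of a b] unfolding givens_to_def by simp
qed

definition support_ge_cong :: "nat \<Rightarrow> nat \<Rightarrow> nat \<Rightarrow> complex vec \<Rightarrow> bool" where
  "support_ge_cong n s k v \<longleftrightarrow> (\<forall>x<2 ^ n. v $ x \<noteq> 0 \<longrightarrow> x mod 2 ^ s = k mod 2 ^ s \<and> k \<le> x)"

definition Qk_bit :: "nat \<Rightarrow> nat \<Rightarrow> bool" where
  "Qk_bit k s \<longleftrightarrow> qbit k s = 0 \<and> k mod 2 ^ (s + 1) \<noteq> 0"

lemma Qk_eq_card_Qk_bit: "Qk k n = card {s \<in> {0..<n}. Qk_bit k s}"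
  unfolding Qk_def Qk_bit_def ..

lemma Qk_bit_iff: "Qk_bit k s \<longleftrightarrow> qbit k s = 0 \<and> k mod 2 ^ s \<noteq> 0"
  unfolding Qk_bit_def using mod_pow_Suc_decomp[of k s] by auto

text \<open>The block applied to qubit \<open>s\<close> when the higher qubits hold \<open>h\<close>: below the block of \<open>k\<close>
  nothing is done, above it the two amplitudes are merged into the slot \<open>qbit k s\<close>. The block of
  \<open>k\<close> must be left alone when it contains basis states below \<open>k\<close>, i.e.\ unless \<open>qbit k s = 0\<close>
  and the lower bits of \<open>k\<close> vanish; when \<open>Qk_bit k s\<close> holds an extra controlled gate then
  clears it.\<close>

definition merge_block :: "nat \<Rightarrow> nat \<Rightarrow> complex vec \<Rightarrow> nat \<Rightarrow> complex mat" where
  "merge_block k s v h =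
     (if h < k div 2 ^ Suc s \<or> (h = k div 2 ^ Suc s \<and> (qbit k s = 1 \<or> Qk_bit k s)) then 1\<^sub>m 2
      else givens_to (qbit k s) (v $ (h * 2 ^ Suc s + 0 * 2 ^ s + k mod 2 ^ s))
        (v $ (h * 2 ^ Suc s + 1 * 2 ^ s + k mod 2 ^ s)))"

lemma merge_block_unitary: "unitary2 (merge_block k s v h)"
  unfolding merge_block_def using unitary2_one givens_to_unitary by auto

lemma merge_block_below:
  assumes "i < k"
  shows "merge_block k s v (i div 2 ^ Suc s) = 1\<^sub>m 2"
proof -
  have "i div 2 ^ Suc s \<le> k div 2 ^ Suc s"
    using assms by (simp add: div_le_mono)
  moreover have "qbit k s = 1 \<or> Qk_bit k s" if "i div 2 ^ Suc s = k div 2 ^ Suc s"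
  proof (rule ccontr)
    assume "\<not> (qbit k s = 1 \<or> Qk_bit k s)"
    then have "qbit k s = 0" "k mod 2 ^ s = 0"
      using qbit_cases[of k s] unfolding Qk_bit_iff by auto
    then have "k = k div 2 ^ Suc s * 2 ^ Suc s"
      using index_decomp[of k s] by simp
    also have "\<dots> \<le> i"
      using that by (metis div_mult_mod_eq le_add1)
    finally show False
      using assms by simp
  qed
  ultimately show ?thesis
    unfolding merge_block_def by fastforce
qed

lemma support_ge_cong_set_qbit:
  assumes "support_ge_cong n s k v" "x < 2 ^ n" "s < n" "\<beta> < 2" "v $ set_qbit s \<beta> x \<noteq> 0"
  shows "x mod 2 ^ s = k mod 2 ^ s" "k div 2 ^ Suc s \<le> x div 2 ^ Suc s"
proof -
  have "set_qbit s \<beta> x mod 2 ^ s = k mod 2 ^ s" "k \<le> set_qbit s \<beta> x"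
    using assms set_qbit_less[OF assms(2,3,4)] unfolding support_ge_cong_def by auto
  then show "x mod 2 ^ s = k mod 2 ^ s"
    using assms(4) by simp
  have "k div 2 ^ Suc s \<le> set_qbit s \<beta> x div 2 ^ Suc s"
    by (rule div_le_mono) fact
  then show "k div 2 ^ Suc s \<le> x div 2 ^ Suc s"
    unfolding set_qbit_div[OF assms(4)] .
qed

lemma merge_block_output:
  assumes supp: "support_ge_cong n s k v" and x: "x < 2 ^ n" and s: "s < n"
    and nz: "merge_block k s v (x div 2 ^ Suc s) $$ (qbit x s, 0) * v $ set_qbit s 0 x
      + merge_block k s v (x div 2 ^ Suc s) $$ (qbit x s, 1) * v $ set_qbit s 1 x \<noteq> 0"
  shows "x mod 2 ^ s = k mod 2 ^ s \<and> k \<le> x \<and>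
    (x mod 2 ^ Suc s = k mod 2 ^ Suc s \<or> Qk_bit k s \<and> x div 2 ^ Suc s = k div 2 ^ Suc s)"
proof -
  define K where "K = k div 2 ^ Suc s"
  define \<kappa> where "\<kappa> = qbit k s"
  define L where "L = k mod 2 ^ s"
  define h where "h = x div 2 ^ Suc s"
  define \<beta> where "\<beta> = qbit x s"
  have \<kappa>: "\<kappa> < 2" and \<beta>: "\<beta> < 2" and L: "L < 2 ^ s"
    unfolding \<kappa>_def \<beta>_def L_def using qbit_less_2 by simp_all
  have k: "k = K * 2 ^ Suc s + \<kappa> * 2 ^ s + L"
    unfolding K_def \<kappa>_def L_def by (rule index_decomp)
  have "\<exists>\<gamma><2. v $ set_qbit s \<gamma> x \<noteq> 0"
  proof (rule ccontr)
    assume "\<not> ?thesis"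
    then have "v $ set_qbit s 0 x = 0" "v $ set_qbit s 1 x = 0"
      by auto
    then show False
      using nz by simp
  qed
  then obtain \<gamma> where "\<gamma> < 2" "v $ set_qbit s \<gamma> x \<noteq> 0"
    by blast
  note low = support_ge_cong_set_qbit[OF supp x s this]
  have xL: "x mod 2 ^ s = L" and "K \<le> h"
    using low unfolding L_def K_def h_def by simp_all
  have x_eq: "x = h * 2 ^ Suc s + \<beta> * 2 ^ s + L"
    using index_decomp[of x s] xL unfolding h_def \<beta>_def by simp
  have set_eq: "set_qbit s \<gamma> x = h * 2 ^ Suc s + \<gamma> * 2 ^ s + L" for \<gamma>
    unfolding set_qbit_def h_def xL ..
  have "x mod 2 ^ Suc s = \<beta> * 2 ^ s + L" "k mod 2 ^ Suc s = \<kappa> * 2 ^ s + L"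
    using mod_pow_Suc_decomp[of x s] mod_pow_Suc_decomp[of k s] xL
    unfolding \<beta>_def \<kappa>_def L_def by simp_all
  then have mod_eq: "x mod 2 ^ Suc s = k mod 2 ^ Suc s \<longleftrightarrow> \<beta> = \<kappa>"
    by simp
  show ?thesis
  proof (cases "h = K \<and> (\<kappa> = 1 \<or> Qk_bit k s)")
    case True
    then have "merge_block k s v h = 1\<^sub>m 2"
      unfolding merge_block_def K_def \<kappa>_def by simp
    moreover have "\<beta> = 0 \<or> \<beta> = 1"
      using \<beta> by linarith
    ultimately have "v $ set_qbit s \<beta> x \<noteq> 0"
      using nz unfolding h_def[symmetric] \<beta>_def[symmetric] one_mat2 by auto
    then have "v $ x \<noteq> 0"
      unfolding \<beta>_def by simp
    then have "k \<le> x"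
      using supp x unfolding support_ge_cong_def by blast
    moreover have "x mod 2 ^ Suc s = k mod 2 ^ Suc s" if "\<kappa> = 1"
    proof (rule ccontr)
      assume "x mod 2 ^ Suc s \<noteq> k mod 2 ^ Suc s"
      then have "\<beta> = 0"
        using mod_eq that \<beta> by linarith
      then have "x < k"
        using True that unfolding k x_eq by simp
      then show False
        using \<open>k \<le> x\<close> by simp
    qed
    ultimately show ?thesis
      using True xL unfolding L_def h_def K_def by blast
  next
    case False
    then have "merge_block k s v h = givens_to \<kappa> (v $ set_qbit s 0 x) (v $ set_qbit s 1 x)"
      using \<open>K \<le> h\<close> unfolding merge_block_def set_eq K_def \<kappa>_def L_def by auto
    have "\<beta> = \<kappa>"
    proof (rule ccontr)
      assume "\<beta> \<noteq> \<kappa>"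
      then have "\<beta> = 1 - \<kappa>"
        using \<beta> \<kappa> by linarith
      then show False
        using nz givens_to_row[OF \<kappa>] \<open>merge_block k s v h = _\<close>
        unfolding h_def[symmetric] \<beta>_def[symmetric] by simp
    qed
    moreover have "k \<le> x"
    proof (cases "h = K")
      case True
      then show ?thesis
        using \<open>\<beta> = \<kappa>\<close> unfolding k x_eq by simp
    next
      case False
      then have "k < x"
        using \<open>K \<le> h\<close> unfolding k x_eq by (intro index_less_of_high_less[OF _ \<kappa> L]) simp
      then show ?thesis
        by simp
    qed
    ultimately show ?thesis
      using xL mod_eq unfolding L_def by simp
  qed
qed

definition phase_fixes :: "nat \<Rightarrow> nat \<Rightarrow> complex mat \<Rightarrow> bool" where
  "phase_fixes n k M \<longleftrightarrow>
     (\<forall>i<k. \<exists>c. cmod c = 1 \<and> M *\<^sub>v unit_vec (2 ^ n) i = c \<cdot>\<^sub>v unit_vec (2 ^ n) i)"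

lemma phase_fixes_mult:
  assumes "phase_fixes n k A" "phase_fixes n k B" "A \<in> carrier_mat (2 ^ n) (2 ^ n)"
    and "B \<in> carrier_mat (2 ^ n) (2 ^ n)"
  shows "phase_fixes n k (A * B)"
  unfolding phase_fixes_def
proof (intro allI impI)
  fix i
  assume "i < k"
  then obtain c d where "cmod c = 1" "A *\<^sub>v unit_vec (2 ^ n) i = c \<cdot>\<^sub>v unit_vec (2 ^ n) i"
    "cmod d = 1" "B *\<^sub>v unit_vec (2 ^ n) i = d \<cdot>\<^sub>v unit_vec (2 ^ n) i"
    using assms(1,2) unfolding phase_fixes_def by blast
  then show "\<exists>c. cmod c = 1 \<and> A * B *\<^sub>v unit_vec (2 ^ n) i = c \<cdot>\<^sub>v unit_vec (2 ^ n) i"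
    using assms(3,4)
    by (intro exI[of _ "c * d"])
      (simp add: norm_mult assoc_mult_mat_vec[of _ "2 ^ n" "2 ^ n"] mult_mat_vec smult_smult_assoc ac_simps)
qed

lemma phase_fixes_circuit_append:
  "phase_fixes n k (circuit_mat n C1) \<Longrightarrow> phase_fixes n k (circuit_mat n C2) \<Longrightarrow>
   phase_fixes n k (circuit_mat n (C1 @ C2))"
  unfolding circuit_mat_append by (rule phase_fixes_mult) simp_all

lemma diag_phase2_entries:
  assumes "diag_phase2 E" "r < 2"
  shows "E $$ (r, 1 - r) = 0" "E $$ (1 - r, r) = 0" "cmod (E $$ (r, r)) = 1"
proof -
  obtain x y where "E = mat2 x 0 0 y" "cmod x = 1" "cmod y = 1"
    using assms(1) unfolding diag_phase2_def by blast
  moreover have "r = 0 \<or> r = 1"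
    using assms(2) by linarith
  ultimately show "E $$ (r, 1 - r) = 0" "E $$ (1 - r, r) = 0" "cmod (E $$ (r, r)) = 1"
    by auto
qed

lemma mux_mat_diag_phase2_mult_vec:
  assumes "a < 2 ^ n" "t < n" "w \<in> carrier_vec (2 ^ n)" "diag_phase2 (B a)"
  shows "(mux_mat n t B *\<^sub>v w) $ a = B a $$ (qbit a t, qbit a t) * w $ a"
proof -
  obtain x y where B: "B a = mat2 x 0 0 y"
    using assms(4) unfolding diag_phase2_def by blast
  consider "qbit a t = 0" "set_qbit t 0 a = a" | "qbit a t = 1" "set_qbit t 1 a = a"
    by (metis qbit_cases set_qbit_qbit_self)
  then show ?thesis
    using mux_mat_mult_vec[OF assms(1-3), of B] unfolding B by cases simp_all
qed

lemma phase_fixes_mux_mat: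
  assumes "t < n" "k \<le> 2 ^ n" "indep_of_qbit t B"
    and "\<And>i. i < k \<Longrightarrow> B i $$ (1 - qbit i t, qbit i t) = 0 \<and> cmod (B i $$ (qbit i t, qbit i t)) = 1"
  shows "phase_fixes n k (mux_mat n t B)"
  unfolding phase_fixes_def
proof (intro allI impI)
  fix i
  assume "i < k"
  then have "i < 2 ^ n"
    using assms(2) by simp
  then show "\<exists>c. cmod c = 1 \<and> mux_mat n t B *\<^sub>v unit_vec (2 ^ n) i = c \<cdot>\<^sub>v unit_vec (2 ^ n) i"
    using mux_mat_unit_vec[OF _ assms(1,3)] assms(4)[OF \<open>i < k\<close>] by blast
qed

lemma ucg_mat_all_controls:
  assumes "s < n"
  shows "ucg_mat n s (n - Suc s) G = mux_mat n s (\<lambda>a. G (a div 2 ^ Suc s))"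
  unfolding ucg_mat_def using div_pow_Suc_less[OF _ assms] by (intro mux_mat_cong) simp

lemma merge_step:
  assumes s: "s < n" and k: "k < 2 ^ n" and v: "v \<in> carrier_vec (2 ^ n)"
    and supp: "support_ge_cong n s k v"
  obtains D where "wf_circuit n D" "cnot_count D \<le> 2 ^ (n - Suc s) - 1"
    "phase_fixes n k (circuit_mat n D)"
    "\<forall>x<2 ^ n. (circuit_mat n D *\<^sub>v v) $ x \<noteq> 0 \<longrightarrow> x mod 2 ^ s = k mod 2 ^ s \<and> k \<le> x \<and>
      (x mod 2 ^ Suc s = k mod 2 ^ Suc s \<or> Qk_bit k s \<and> x div 2 ^ Suc s = k div 2 ^ Suc s)"
proof -
  let ?M = "\<lambda>a. merge_block k s v (a div 2 ^ Suc s)"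
  obtain D E where D: "wf_circuit n D" "cnot_count D \<le> 2 ^ (n - Suc s) - 1"
    "\<forall>h<2 ^ (n - Suc s). diag_phase2 (E h)"
    "circuit_mat n D = ucg_mat n s (n - Suc s) (\<lambda>h. E h * merge_block k s v h)"
    using ucg_circuit[of s "n - Suc s" n "merge_block k s v"] s merge_block_unitary by auto
  let ?E = "\<lambda>a. E (a div 2 ^ Suc s)"
  have E: "diag_phase2 (?E a)" if "a < 2 ^ n" for a
    using D(3) div_pow_Suc_less[OF that s] by blast
  have "circuit_mat n D = mux_mat n s (\<lambda>a. ?E a * ?M a)"
    unfolding D(4) ucg_mat_all_controls[OF s] ..
  also have "\<dots> = mux_mat n s ?E * mux_mat n s ?M"
    by (rule mux_mat_mult[symmetric, OF s indep_of_qbit_div])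
      (use E diag_phase2_carrier merge_block_unitary unitary2_carrier in auto)
  finally have D_eq: "circuit_mat n D = mux_mat n s ?E * mux_mat n s ?M" .
  have k_le: "k \<le> 2 ^ n"
    using k by simp
  have "phase_fixes n k (mux_mat n s ?E)"
    using E k diag_phase2_entries(2,3)[OF _ qbit_less_2]
    by (intro phase_fixes_mux_mat[OF s k_le indep_of_qbit_div]) auto
  moreover have "phase_fixes n k (mux_mat n s ?M)"
    using merge_block_below diag_phase2_entries(2,3)[OF diag_phase2_one qbit_less_2]
    by (intro phase_fixes_mux_mat[OF s k_le indep_of_qbit_div]) auto
  ultimately have "phase_fixes n k (circuit_mat n D)"
    unfolding D_eq by (intro phase_fixes_mult) simp_all
  moreover have "x mod 2 ^ s = k mod 2 ^ s \<and> k \<le> x \<and>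
      (x mod 2 ^ Suc s = k mod 2 ^ Suc s \<or> Qk_bit k s \<and> x div 2 ^ Suc s = k div 2 ^ Suc s)"
    if x: "x < 2 ^ n" and nz: "(circuit_mat n D *\<^sub>v v) $ x \<noteq> 0" for x
  proof -
    have "circuit_mat n D *\<^sub>v v = mux_mat n s ?E *\<^sub>v (mux_mat n s ?M *\<^sub>v v)"
      unfolding D_eq using v by (simp add: assoc_mult_mat_vec[of _ "2 ^ n" "2 ^ n" _ "2 ^ n"])
    then have "(mux_mat n s ?M *\<^sub>v v) $ x \<noteq> 0"
      using nz mux_mat_diag_phase2_mult_vec[of x n s "mux_mat n s ?M *\<^sub>v v" ?E, OF x s
          mult_mat_vec_carrier[OF mux_mat_carrier v] E[OF x]]
      by simp
    then show ?thesis
      using merge_block_output[OF supp x s] mux_mat_mult_vec[OF x s v] by simp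
  qed
  ultimately show ?thesis
    using that D(1,2) by blast
qed

lemma clear_step:
  assumes s: "s < n" and k: "k < 2 ^ n" and w: "w \<in> carrier_vec (2 ^ n)"
    and CU: "sufficient_CU n N" and k0: "qbit k s = 0"
    and supp: "\<forall>x<2 ^ n. w $ x \<noteq> 0 \<longrightarrow> x mod 2 ^ s = k mod 2 ^ s \<and> k \<le> x \<and>
      (x mod 2 ^ Suc s = k mod 2 ^ Suc s \<or> x div 2 ^ Suc s = k div 2 ^ Suc s)"
  obtains D where "wf_circuit n D" "cnot_count D \<le> N" "phase_fixes n k (circuit_mat n D)"
    "support_ge_cong n (Suc s) k (circuit_mat n D *\<^sub>v w)"
proof -
  define U where "U = givens2 (w $ k) (w $ set_qbit s 1 k)"
  define B where "B a = (if agree_except s a k then U else 1\<^sub>m 2)" for a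
  obtain D where D: "wf_circuit n D" "cnot_count D \<le> N" "circuit_mat n D = mux_mat n s B"
    using CU s k givens2(1) controlled_gate_eq_mux[OF k]
    unfolding sufficient_CU_def decomposable_with_def U_def B_def by metis
  have k_set: "set_qbit s 0 k = k"
    using set_qbit_qbit_self[of s k] k0 by simp
  have "k = k div 2 ^ Suc s * 2 ^ Suc s + k mod 2 ^ s"
    using index_decomp[of k s] k0 by simp
  then have "k < set_qbit s 1 k"
    unfolding set_qbit_def using zero_less_power[of "2::nat" s] by linarith
  then have below: "B i = 1\<^sub>m 2" if "i < k" for i
    using that eq_set_qbit_if_agree_except[of s k i] qbit_cases[of i s] k_set
    unfolding B_def by (metis agree_except_sym not_less_iff_gr_or_eq)
  have indep: "indep_of_qbit s B"
    unfolding indep_of_qbit_def B_def by (metis agree_except_sym agree_except_trans)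
  have "phase_fixes n k (circuit_mat n D)"
    unfolding D(3) using below diag_phase2_entries(2,3)[OF diag_phase2_one qbit_less_2] k
    by (intro phase_fixes_mux_mat[OF s _ indep]) auto
  moreover have "x mod 2 ^ Suc s = k mod 2 ^ Suc s \<and> k \<le> x"
    if x: "x < 2 ^ n" and nz: "(circuit_mat n D *\<^sub>v w) $ x \<noteq> 0" for x
  proof (cases "agree_except s x k")
    case True
    then have "(circuit_mat n D *\<^sub>v w) $ x
        = U $$ (qbit x s, 0) * w $ k + U $$ (qbit x s, 1) * w $ set_qbit s 1 k"
      unfolding D(3) mux_mat_mult_vec[OF x s w] B_def set_qbit_cong[OF True] k_set by simp
    then have "qbit x s \<noteq> 1"
      using nz givens2(2) unfolding U_def by auto
    then have "x = k"
      using agree_except_eqI[OF True] k0 qbit_cases[of x s] by simp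
    then show ?thesis
      by simp
  next
    case False
    consider "qbit x s = 0" "set_qbit s 0 x = x" | "qbit x s = 1" "set_qbit s 1 x = x"
      by (metis qbit_cases set_qbit_qbit_self)
    then have "(circuit_mat n D *\<^sub>v w) $ x = w $ x"
      unfolding D(3) mux_mat_mult_vec[OF x s w] B_def using False by cases (simp_all add: one_mat2)
    then show ?thesis
      using supp x nz False unfolding agree_except_def by auto
  qed
  ultimately show ?thesis
    using that D(1,2) unfolding support_ge_cong_def by blast
qed

lemma low_bit_step:
  assumes s: "s < n" and k: "k < 2 ^ n" and v: "v \<in> carrier_vec (2 ^ n)"
    and supp: "support_ge_cong n s k v" and CU: "sufficient_CU n N"
  obtains D where "wf_circuit n D" "cnot_count D \<le> (2 ^ (n - Suc s) - 1) + (if Qk_bit k s then N else 0)"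
    "phase_fixes n k (circuit_mat n D)" "support_ge_cong n (Suc s) k (circuit_mat n D *\<^sub>v v)"
proof -
  obtain DM where DM: "wf_circuit n DM" "cnot_count DM \<le> 2 ^ (n - Suc s) - 1"
    "phase_fixes n k (circuit_mat n DM)"
    and DM_supp: "\<forall>x<2 ^ n. (circuit_mat n DM *\<^sub>v v) $ x \<noteq> 0 \<longrightarrow> x mod 2 ^ s = k mod 2 ^ s \<and> k \<le> x \<and>
      (x mod 2 ^ Suc s = k mod 2 ^ Suc s \<or> Qk_bit k s \<and> x div 2 ^ Suc s = k div 2 ^ Suc s)"
    using merge_step[OF s k v supp] by blast
  show ?thesis
  proof (cases "Qk_bit k s")
    case True
    obtain DQ where DQ: "wf_circuit n DQ" "cnot_count DQ \<le> N" "phase_fixes n k (circuit_mat n DQ)"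
      "support_ge_cong n (Suc s) k (circuit_mat n DQ *\<^sub>v (circuit_mat n DM *\<^sub>v v))"
      using clear_step[OF s k mult_mat_vec_carrier[OF circuit_mat_carrier v] CU] True DM_supp
      unfolding Qk_bit_def by blast
    show ?thesis
    proof (rule that[of "DM @ DQ"])
      show "cnot_count (DM @ DQ) \<le> (2 ^ (n - Suc s) - 1) + (if Qk_bit k s then N else 0)"
        using add_mono[OF DM(2) DQ(2)] True by simp
      show "support_ge_cong n (Suc s) k (circuit_mat n (DM @ DQ) *\<^sub>v v)"
        using DQ(4) circuit_mat_append_mult_vec[OF v] by simp
    qed (use DM DQ phase_fixes_circuit_append in auto)
  next
    case False
    then have "support_ge_cong n (Suc s) k (circuit_mat n DM *\<^sub>v v)"
      using DM_supp unfolding support_ge_cong_def by blast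
    then show ?thesis
      using that DM False by simp
  qed
qed

lemma low_bits_reduction:
  assumes "s \<le> n" "k < 2 ^ n" "psi \<in> carrier_vec (2 ^ n)" "\<forall>i<k. psi $ i = 0" "sufficient_CU n N"
  shows "\<exists>C. wf_circuit n C
    \<and> cnot_count C \<le> (\<Sum>s'<s. 2 ^ (n - Suc s') - 1) + card {s' \<in> {0..<s}. Qk_bit k s'} * N
    \<and> phase_fixes n k (circuit_mat n C) \<and> support_ge_cong n s k (circuit_mat n C *\<^sub>v psi)"
  using assms(1)
proof (induction s)
  case 0
  have "wf_circuit n []" "phase_fixes n k (circuit_mat n [])"
    unfolding wf_circuit_def phase_fixes_def by (auto intro: exI[of _ 1])
  moreover have "support_ge_cong n 0 k (circuit_mat n [] *\<^sub>v psi)"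
    using assms(3,4) unfolding support_ge_cong_def by (auto simp: not_less[symmetric])
  ultimately show ?case
    by (intro exI[of _ "[]"]) (simp add: cnot_count_def)
next
  case (Suc s)
  then obtain C where C: "wf_circuit n C"
    "cnot_count C \<le> (\<Sum>s'<s. 2 ^ (n - Suc s') - 1) + card {s' \<in> {0..<s}. Qk_bit k s'} * N"
    "phase_fixes n k (circuit_mat n C)" "support_ge_cong n s k (circuit_mat n C *\<^sub>v psi)"
    by auto
  obtain D where D: "wf_circuit n D"
    "cnot_count D \<le> (2 ^ (n - Suc s) - 1) + (if Qk_bit k s then N else 0)"
    "phase_fixes n k (circuit_mat n D)" "support_ge_cong n (Suc s) k (circuit_mat n D *\<^sub>v (circuit_mat n C *\<^sub>v psi))"
    using low_bit_step[OF _ assms(2) mult_mat_vec_carrier[OF circuit_mat_carrier assms(3)] C(4) assms(5)]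
      Suc.prems by auto
  have "card {s' \<in> {0..<Suc s}. Qk_bit k s'} = card {s' \<in> {0..<s}. Qk_bit k s'} + (if Qk_bit k s then 1 else 0)"
  proof -
    have "{s' \<in> {0..<Suc s}. Qk_bit k s'} = (if Qk_bit k s then insert s else id) {s' \<in> {0..<s}. Qk_bit k s'}"
      by (auto simp: less_Suc_eq)
    then show ?thesis
      by simp
  qed
  note card = this
  have "cnot_count (C @ D) = cnot_count C + cnot_count D"
    by simp
  also have "\<dots> \<le> (\<Sum>s'<s. 2 ^ (n - Suc s') - 1) + card {s' \<in> {0..<s}. Qk_bit k s'} * N
      + ((2 ^ (n - Suc s) - 1) + (if Qk_bit k s then N else 0))"
    by (rule add_mono[OF C(2) D(2)])
  also have "\<dots> = (\<Sum>s'<Suc s. 2 ^ (n - Suc s') - 1) + card {s' \<in> {0..<Suc s}. Qk_bit k s'} * N"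
  proof -
    define P where "P = (2::nat) ^ (n - Suc s) - 1"
    show ?thesis
      unfolding card sum.lessThan_Suc P_def[symmetric] by (cases "Qk_bit k s") (simp_all add: algebra_simps)
  qed
  finally have "cnot_count (C @ D)
      \<le> (\<Sum>s'<Suc s. 2 ^ (n - Suc s') - 1) + card {s' \<in> {0..<Suc s}. Qk_bit k s'} * N" .
  moreover have "support_ge_cong n (Suc s) k (circuit_mat n (C @ D) *\<^sub>v psi)"
    using D(4) circuit_mat_append_mult_vec[OF assms(3)] by simp
  ultimately show ?case
    using C D phase_fixes_circuit_append by (intro exI[of _ "C @ D"]) simp
qed

lemma support_ge_cong_all_bits:
  assumes "support_ge_cong n n k v" "v \<in> carrier_vec (2 ^ n)" "v \<bullet>c v = 1" "k < 2 ^ n"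
  shows "\<exists>c. cmod c = 1 \<and> v = c \<cdot>\<^sub>v unit_vec (2 ^ n) k"
proof -
  have zero: "v $ x = 0" if "x < 2 ^ n" "x \<noteq> k" for x
    using assms(1,4) that unfolding support_ge_cong_def by auto
  have "v = v $ k \<cdot>\<^sub>v unit_vec (2 ^ n) k"
    using assms(2,4) zero by (intro eq_vecI) (auto simp: unit_vec_def)
  moreover have "v \<bullet>c v = v $ k * cnj (v $ k)"
  proof -
    have "v \<bullet>c v = (\<Sum>x\<in>{0..<2 ^ n}. v $ x * cnj (v $ x))"
      using assms(2) by (simp add: scalar_prod_def)
    also have "\<dots> = (\<Sum>x\<in>{0..<2 ^ n}. if x = k then v $ k * cnj (v $ k) else 0)"
      using zero by (intro sum.cong) auto
    finally have "v \<bullet>c v = (\<Sum>x\<in>{0..<2 ^ n}. if x = k then v $ k * cnj (v $ k) else 0)" .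
    then show ?thesis
      using assms(4) by simp
  qed
  then have "complex_of_real ((cmod (v $ k))\<^sup>2) = 1"
    using assms(3) cnj_mult_self[of "v $ k"] by (simp add: mult.commute)
  then have "(cmod (v $ k))\<^sup>2 = 1\<^sup>2"
    by (metis of_real_eq_1_iff one_power2)
  then have "cmod (v $ k) = 1"
    by (rule power2_eq_imp_eq) simp_all
  ultimately show ?thesis
    by blast
qed

lemma sum_pow_minus_one: "(\<Sum>s<n. (2::nat) ^ (n - Suc s) - 1) = 2 ^ n - n - 1"
proof -
  have "(\<Sum>s<n. (2::nat) ^ (n - Suc s) - 1) = (\<Sum>s<n. (2::nat) ^ s - 1)"
    using sum.nat_diff_reindex[of "\<lambda>i. (2::nat) ^ i - 1" n] by simp
  also have "\<dots> = 2 ^ n - n - 1"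
  proof (induction n)
    case (Suc n)
    then show ?case
      using Suc_leI[OF less_exp[of n]] by (simp add: power_Suc)
  qed simp
  finally show ?thesis .
qed

lemma exp_i_Arg:
  assumes "cmod z = 1"
  shows "exp (\<i> * complex_of_real (Arg z)) = z"
proof -
  have "cis (Arg z) = sgn z"
    using assms by (intro cis_Arg) auto
  then show ?thesis
    using assms by (simp add: sgn_div_norm cis_conv_exp)
qed

theorem lemma13:
  fixes n k N :: nat and psi :: "complex vec"
  assumes "n \<ge> 2"
    and "1 \<le> k" and "k \<le> 2 ^ n - 1"
    and "psi \<in> carrier_vec (2 ^ n)" and "psi \<bullet>c psi = 1"
    and "\<forall>i < k. psi $ i = 0"
    and "sufficient_CU n N"
  shows "\<exists>C \<phi>. wf_circuit n C
           \<and> cnot_count C \<le> (2 ^ n - n - 1) + Qk k n * N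
           \<and> (\<forall>i < k. circuit_mat n C *\<^sub>v unit_vec (2 ^ n) i
                         = exp (\<i> * complex_of_real (\<phi> i)) \<cdot>\<^sub>v unit_vec (2 ^ n) i)
           \<and> circuit_mat n C *\<^sub>v psi = exp (\<i> * complex_of_real (\<phi> k)) \<cdot>\<^sub>v unit_vec (2 ^ n) k"
proof -
  have k: "k < 2 ^ n"
    using assms(3) zero_less_power[of "2::nat" n] by linarith
  obtain C where C: "wf_circuit n C" "cnot_count C \<le> (2 ^ n - n - 1) + Qk k n * N"
    "phase_fixes n k (circuit_mat n C)" "support_ge_cong n n k (circuit_mat n C *\<^sub>v psi)"
    using low_bits_reduction[OF order_refl k assms(4,6,7)]
    unfolding sum_pow_minus_one Qk_eq_card_Qk_bit by blast
  obtain c where c: "cmod c = 1" "circuit_mat n C *\<^sub>v psi = c \<cdot>\<^sub>v unit_vec (2 ^ n) k"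
    using support_ge_cong_all_bits[OF C(4) mult_mat_vec_carrier[OF circuit_mat_carrier assms(4)] _ k]
      circuit_mat_preserves_norm[OF C(1) assms(4)] assms(5)
    by auto
  have "\<forall>i\<in>{..<k}. \<exists>c. cmod c = 1 \<and> circuit_mat n C *\<^sub>v unit_vec (2 ^ n) i = c \<cdot>\<^sub>v unit_vec (2 ^ n) i"
    using C(3) unfolding phase_fixes_def by simp
  from bchoice[OF this] obtain \<mu> where \<mu>: "\<forall>i\<in>{..<k}. cmod (\<mu> i) = 1
      \<and> circuit_mat n C *\<^sub>v unit_vec (2 ^ n) i = \<mu> i \<cdot>\<^sub>v unit_vec (2 ^ n) i"
    by blast
  show ?thesis
    using C(1,2) c \<mu> exp_i_Arg
    by (intro exI[of _ C] exI[of _ "\<lambda>i. if i < k then Arg (\<mu> i) else Arg c"]) simp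
qed

end
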